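(* Let $\partial_1,\partial_2$ be nonzero homogeneous locally nilpotent derivations of fiber type on $A$ with degrees $e_1,e_2\in M$, and suppose $e_1+e_2\notin\omega_M$. Then the Lie algebra $L\subseteq\operatorname{Der}(A)$ generated over $\mathbf k$ by $\partial_1$ and $\partial_2$ is finite dimensional, and every element of $L$ is a locally nilpotent derivation.
   Context: Let $\mathbf k$ be an algebraically closed field of characteristic zero, $\mathbb T\cong(\mathbf k^\times)^n$ an algebraic torus with character lattice $M$. Let $X$ be a normal affine variety with an effective $\mathbb T$-action, $A=\mathbf k[X]$ with the induced grading $A=\bigoplus_{m\in\omega_M}A_m\chi^m$, $A_m\subseteq\mathbf k(X)^{\mathbb T}$, where the weight cone $\omega\subseteq M\otimes\mathbb Q$ is the cone spanned by $\{m:A_m\ne0\}$ and $\omega_M=\omega\cap M$; $K=\operatorname{Frac}A$. A derivation $\partial$ of $A$ is homogeneous of degree $e\in M$ if $\partial(A_m\chi^m)\subseteq A_{m+e}\chi^{m+e}$ for all $m$; it is locally nilpotent if every element of $A$ is killed by some power of $\partial$; a homogeneous locally nilpotent derivation is of fiber type if its unique extension to $K$ annihilates $\mathbf k(X)^{\mathbb T}$. *)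

theory Defs
  imports "HOL-Library.Function_Algebras" "HOL-Computational_Algebra.Polynomial" "HOL-Computational_Algebra.Fraction_Field"
begin

definition alg_closed_field :: "'k::field itself \<Rightarrow> bool" where
  "alg_closed_field _ \<longleftrightarrow> (\<forall>p :: 'k poly. degree p > 0 \<longrightarrow> (\<exists>x. poly p x = 0))"

section \<open>The k-algebra A (an integral domain 'a with structure map iota : k -> A)\<close>

definition k_algebra_map :: "('k::field \<Rightarrow> 'a::idom) \<Rightarrow> bool" where
  "k_algebra_map \<iota> \<longleftrightarrow> inj \<iota> \<and> \<iota> 0 = 0 \<and> \<iota> 1 = 1 \<and>
     (\<forall>x y. \<iota> (x + y) = \<iota> x + \<iota> y) \<and> (\<forall>x y. \<iota> (x * y) = \<iota> x * \<iota> y)"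

inductive_set subalg_gen :: "('k \<Rightarrow> 'a::comm_ring_1) \<Rightarrow> 'a set \<Rightarrow> 'a set"
  for \<iota> :: "'k \<Rightarrow> 'a" and G :: "'a set" where
  gen: "g \<in> G \<Longrightarrow> g \<in> subalg_gen \<iota> G"
| const: "\<iota> c \<in> subalg_gen \<iota> G"
| add: "x \<in> subalg_gen \<iota> G \<Longrightarrow> y \<in> subalg_gen \<iota> G \<Longrightarrow> x + y \<in> subalg_gen \<iota> G"
| mult: "x \<in> subalg_gen \<iota> G \<Longrightarrow> y \<in> subalg_gen \<iota> G \<Longrightarrow> x * y \<in> subalg_gen \<iota> G"

definition finitely_generated :: "('k \<Rightarrow> 'a::comm_ring_1) \<Rightarrow> bool" where
  "finitely_generated \<iota> \<longleftrightarrow> (\<exists>G. finite G \<and> (\<forall>a. a \<in> subalg_gen \<iota> G))"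

definition integrally_closed :: "'a::idom itself \<Rightarrow> bool" where
  "integrally_closed _ \<longleftrightarrow>
     (\<forall>x :: 'a fract. (\<exists>p :: 'a poly. lead_coeff p = 1 \<and>
          poly (map_poly (\<lambda>a. Fract a 1) p) x = 0) \<longrightarrow> (\<exists>a. x = Fract a 1))"

section \<open>Gradings by the character lattice M = ('n => int), 'n finite\<close>

definition M_graded :: "('k::field \<Rightarrow> 'a::idom) \<Rightarrow> (('n::finite \<Rightarrow> int) \<Rightarrow> 'a set) \<Rightarrow> bool" where
  "M_graded \<iota> Am \<longleftrightarrow>
     (\<forall>m. 0 \<in> Am m \<and> (\<forall>x\<in>Am m. \<forall>y\<in>Am m. x + y \<in> Am m) \<and> (\<forall>c. \<forall>x\<in>Am m. \<iota> c * x \<in> Am m)) \<and>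
     (\<forall>m m' x y. x \<in> Am m \<longrightarrow> y \<in> Am m' \<longrightarrow> x * y \<in> Am (m + m')) \<and>
     range \<iota> \<subseteq> Am 0 \<and>
     (\<forall>a. \<exists>!c. finite {m. c m \<noteq> 0} \<and> (\<forall>m. c m \<in> Am m) \<and>
              a = (\<Sum>m\<in>{m. c m \<noteq> 0}. c m))"

definition hcomp :: "(('n::finite \<Rightarrow> int) \<Rightarrow> 'a::comm_ring_1 set) \<Rightarrow> 'a \<Rightarrow> ('n \<Rightarrow> int) \<Rightarrow> 'a" where
  "hcomp Am a = (THE c. finite {m. c m \<noteq> 0} \<and> (\<forall>m. c m \<in> Am m) \<and> a = (\<Sum>m\<in>{m. c m \<noteq> 0}. c m))"

definition weights :: "(('n::finite \<Rightarrow> int) \<Rightarrow> 'a::zero set) \<Rightarrow> ('n \<Rightarrow> int) set" where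
  "weights Am = {m. Am m \<noteq> {0}}"

text \<open>omega_M = (cone in M tensor Q spanned by the weights) intersected with M.\<close>
definition weight_cone_M :: "(('n::finite \<Rightarrow> int) \<Rightarrow> 'a::zero set) \<Rightarrow> ('n \<Rightarrow> int) set" where
  "weight_cone_M Am = {m. \<exists>F c. finite F \<and> F \<subseteq> weights Am \<and> (\<forall>s\<in>F. c s \<ge> (0::rat)) \<and>
        (\<lambda>i. of_int (m i)) = (\<lambda>i. \<Sum>s\<in>F. c s * of_int (s i))}"

text \<open>Effectiveness of the torus action: the weights generate M as a group.\<close>
definition effective_grading :: "(('n::finite \<Rightarrow> int) \<Rightarrow> 'a::zero set) \<Rightarrow> bool" where
  "effective_grading Am \<longleftrightarrow> (\<forall>m. \<exists>F c. finite F \<and> F \<subseteq> weights Am \<and>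
        m = (\<lambda>i. \<Sum>s\<in>F. c s * s i))"

section \<open>Torus T = ('n => k^*) acting on A via the grading, and on K = Frac A\<close>

definition character :: "('n::finite \<Rightarrow> int) \<Rightarrow> ('n \<Rightarrow> 'k::field) \<Rightarrow> 'k" where
  "character m t = (\<Prod>i\<in>UNIV. t i powi m i)"

definition torus_act :: "('k::field \<Rightarrow> 'a::comm_ring_1) \<Rightarrow> (('n::finite \<Rightarrow> int) \<Rightarrow> 'a set) \<Rightarrow>
     ('n \<Rightarrow> 'k) \<Rightarrow> 'a \<Rightarrow> 'a" where
  "torus_act \<iota> Am t a = (\<Sum>m\<in>{m. hcomp Am a m \<noteq> 0}. \<iota> (character m t) * hcomp Am a m)"

definition invariant_field :: "('k::field \<Rightarrow> 'a::idom) \<Rightarrow> (('n::finite \<Rightarrow> int) \<Rightarrow> 'a set) \<Rightarrow> 'a fract set" where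
  "invariant_field \<iota> Am = {x. \<forall>t. (\<forall>i. t i \<noteq> 0) \<longrightarrow>
      (\<forall>a b. b \<noteq> 0 \<longrightarrow> x = Fract a b \<longrightarrow> Fract (torus_act \<iota> Am t a) (torus_act \<iota> Am t b) = x)}"

definition is_derivation :: "('k \<Rightarrow> 'a::comm_ring_1) \<Rightarrow> ('a \<Rightarrow> 'a) \<Rightarrow> bool" where
  "is_derivation \<iota> D \<longleftrightarrow> (\<forall>x y. D (x + y) = D x + D y) \<and> (\<forall>c x. D (\<iota> c * x) = \<iota> c * D x) \<and>
     (\<forall>x y. D (x * y) = x * D y + D x * y)"

definition locally_nilpotent :: "('a::zero \<Rightarrow> 'a) \<Rightarrow> bool" where
  "locally_nilpotent D \<longleftrightarrow> (\<forall>a. \<exists>n. (D ^^ n) a = 0)"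

definition homogeneous_of_degree :: "(('n \<Rightarrow> int) \<Rightarrow> 'a set) \<Rightarrow> ('a \<Rightarrow> 'a) \<Rightarrow> ('n \<Rightarrow> int) \<Rightarrow> bool" where
  "homogeneous_of_degree Am D e \<longleftrightarrow> (\<forall>m a. a \<in> Am m \<longrightarrow> D a \<in> Am (m + e))"

definition fract_ext :: "('a::idom \<Rightarrow> 'a) \<Rightarrow> 'a fract \<Rightarrow> 'a fract" where
  "fract_ext D = (THE D'. (\<forall>x y. D' (x + y) = D' x + D' y) \<and> (\<forall>x y. D' (x * y) = x * D' y + D' x * y) \<and>
                         (\<forall>a. D' (Fract a 1) = Fract (D a) 1))"

definition fiber_type :: "('k::field \<Rightarrow> 'a::idom) \<Rightarrow> (('n::finite \<Rightarrow> int) \<Rightarrow> 'a set) \<Rightarrow> ('a \<Rightarrow> 'a) \<Rightarrow> bool" where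
  "fiber_type \<iota> Am D \<longleftrightarrow> (\<forall>x\<in>invariant_field \<iota> Am. fract_ext D x = 0)"

inductive_set lie_gen :: "('k \<Rightarrow> 'a::comm_ring_1) \<Rightarrow> ('a \<Rightarrow> 'a) \<Rightarrow> ('a \<Rightarrow> 'a) \<Rightarrow> ('a \<Rightarrow> 'a) set"
  for \<iota> :: "'k \<Rightarrow> 'a" and D1 D2 :: "'a \<Rightarrow> 'a" where
  gen1: "D1 \<in> lie_gen \<iota> D1 D2"
| gen2: "D2 \<in> lie_gen \<iota> D1 D2"
| add: "D \<in> lie_gen \<iota> D1 D2 \<Longrightarrow> E \<in> lie_gen \<iota> D1 D2 \<Longrightarrow> (\<lambda>x. D x + E x) \<in> lie_gen \<iota> D1 D2"
| smult: "D \<in> lie_gen \<iota> D1 D2 \<Longrightarrow> (\<lambda>x. \<iota> c * D x) \<in> lie_gen \<iota> D1 D2"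
| bracket: "D \<in> lie_gen \<iota> D1 D2 \<Longrightarrow> E \<in> lie_gen \<iota> D1 D2 \<Longrightarrow> (\<lambda>x. D (E x) - E (D x)) \<in> lie_gen \<iota> D1 D2"

definition finite_dim_k :: "('k \<Rightarrow> 'a::comm_ring_1) \<Rightarrow> ('a \<Rightarrow> 'a) set \<Rightarrow> bool" where
  "finite_dim_k \<iota> L \<longleftrightarrow> (\<exists>B. finite B \<and> B \<subseteq> L \<and>
     (\<forall>D\<in>L. \<exists>c. D = (\<lambda>x. \<Sum>b\<in>B. \<iota> (c b) * b x)))"

end

theory Submission
  imports Defs
begin

text \<open>A homogeneous locally nilpotent derivation \<open>\<partial>\<close> of fiber type and degree \<open>e\<close> satisfies
  \<open>\<partial>a/a = \<partial>b/b\<close> for nonzero \<open>a, b\<close> of the same degree \<open>m\<close>, because \<open>a/b\<close> is torus invariant.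
  This logarithmic derivative is additive in \<open>m\<close>, and local nilpotency forces it to be
  \<open>p(m) w\<close> for a fixed \<open>w \<noteq> 0\<close> in \<open>K\<close> and a linear form \<open>p\<close> on \<open>M\<close> with \<open>p \<ge> 0\<close> on the weights
  and \<open>p(e) = -1\<close>.

  For two such derivations put \<open>s = p\<^sub>1(e\<^sub>2)\<close> and \<open>t = p\<^sub>2(e\<^sub>1)\<close>. If \<open>s < 0\<close> then also
  \<open>t < 0\<close>, which forces \<open>p\<^sub>1 = p\<^sub>2\<close>, so \<open>\<partial>\<^sub>1\<close> and \<open>\<partial>\<^sub>2\<close> commute. If \<open>s, t \<ge> 1\<close>, the weights
  contain a progression \<open>n + k(e\<^sub>1 + e\<^sub>2)\<close>, so \<open>e\<^sub>1 + e\<^sub>2 \<in> \<omega>\<^sub>M\<close>. Otherwise, say \<open>t = 0\<close>: then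
  \<open>ad(\<partial>\<^sub>1)\<^sup>k \<partial>\<^sub>2\<close> has weight form with coefficient \<open>s(s-1)\<cdots>(s-k+1)\<close> and vanishes for \<open>k > s\<close>;
  the span of \<open>\<partial>\<^sub>1\<close> and these iterated brackets is a Lie algebra, and all of them lower the
  grading \<open>p\<^sub>1 + (s+1) p\<^sub>2\<close>, which is nonnegative on the weights, so every element is locally
  nilpotent.\<close>

section \<open>Derivations of the fraction field\<close>

definition fract_deriv :: "('a::idom \<Rightarrow> 'a) \<Rightarrow> 'a fract \<Rightarrow> 'a fract" where
  "fract_deriv D x = (THE y. \<forall>a b. b \<noteq> 0 \<longrightarrow> x = Fract a b \<longrightarrow> y = Fract (D a * b - a * D b) (b * b))"

locale leibniz_map =
  fixes D :: "'a::idom \<Rightarrow> 'a"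
  assumes Dadd: "D (x + y) = D x + D y"
    and Dmul: "D (x * y) = x * D y + D x * y"
begin

lemma map_one: "D 1 = 0"
proof -
  have "D 1 = D 1 + D 1" using Dmul[of 1 1] by simp
  then show ?thesis by (simp only: add_cancel_right_right)
qed

lemma fract_deriv_well_defined:
  assumes b: "b \<noteq> 0" and b': "b' \<noteq> 0" and eq: "Fract a b = Fract a' b'"
  shows "Fract (D a * b - a * D b) (b * b) = Fract (D a' * b' - a' * D b') (b' * b')"
proof -
  have E1: "a * b' = a' * b" using eq b b' by (simp add: eq_fract)
  have E2: "a * D b' + D a * b' = a' * D b + D a' * b"
    using arg_cong[OF E1, of D] by (simp add: Dmul)
  have "(D a * b - a * D b) * (b' * b') = (D a' * b' - a' * D b') * (b * b)"
  proof -
    have "(D a * b - a * D b) * (b' * b') - (D a' * b' - a' * D b') * (b * b)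
       = (b' * b) * ((a * D b' + D a * b') - (a' * D b + D a' * b))
         - (b * D b' + b' * D b) * (a * b' - a' * b)"
      by (simp add: algebra_simps)
    also have "\<dots> = 0" using E1 E2 by simp
    finally show ?thesis by simp
  qed
  then show ?thesis using b b' by (simp add: eq_fract)
qed

lemma fract_deriv_Fract:
  assumes "b \<noteq> 0"
  shows "fract_deriv D (Fract a b) = Fract (D a * b - a * D b) (b * b)"
  unfolding fract_deriv_def
proof (rule the_equality)
  show "\<forall>a' b'. b' \<noteq> 0 \<longrightarrow> Fract a b = Fract a' b' \<longrightarrow>
          Fract (D a * b - a * D b) (b * b) = Fract (D a' * b' - a' * D b') (b' * b')"
    using fract_deriv_well_defined assms by blast
  fix y assume "\<forall>a' b'. b' \<noteq> 0 \<longrightarrow> Fract a b = Fract a' b' \<longrightarrow> y = Fract (D a' * b' - a' * D b') (b' * b')"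
  then show "y = Fract (D a * b - a * D b) (b * b)" using assms by blast
qed

lemma fract_deriv_add: "fract_deriv D (x + y) = fract_deriv D x + fract_deriv D y"
proof (cases x, cases y)
  fix a b c d assume x: "x = Fract a b" "b \<noteq> 0" and y: "y = Fract c d" "d \<noteq> 0"
  show ?thesis using x y
    by (simp add: fract_deriv_Fract eq_fract Dadd Dmul algebra_simps)
qed

lemma fract_deriv_mult: "fract_deriv D (x * y) = x * fract_deriv D y + fract_deriv D x * y"
proof (cases x, cases y)
  fix a b c d assume x: "x = Fract a b" "b \<noteq> 0" and y: "y = Fract c d" "d \<noteq> 0"
  show ?thesis using x y
    by (simp add: fract_deriv_Fract eq_fract Dadd Dmul algebra_simps)
qed

lemma fract_deriv_of_A: "fract_deriv D (Fract a 1) = Fract (D a) 1"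
  by (simp add: fract_deriv_Fract map_one)

lemma fract_ext_eq_fract_deriv: "fract_ext D = fract_deriv D"
  unfolding fract_ext_def
proof (rule the_equality)
  show "(\<forall>x y. fract_deriv D (x + y) = fract_deriv D x + fract_deriv D y) \<and> (\<forall>x y. fract_deriv D (x * y) = x * fract_deriv D y + fract_deriv D x * y) \<and>
        (\<forall>a. fract_deriv D (Fract a 1) = Fract (D a) 1)"
    using fract_deriv_add fract_deriv_mult fract_deriv_of_A by blast
  fix D' :: "'a fract \<Rightarrow> 'a fract"
  assume H: "(\<forall>x y. D' (x + y) = D' x + D' y) \<and> (\<forall>x y. D' (x * y) = x * D' y + D' x * y) \<and>
        (\<forall>a. D' (Fract a 1) = Fract (D a) 1)"
  show "D' = fract_deriv D"
  proof
    fix x show "D' x = fract_deriv D x"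
    proof (cases x)
      fix a b assume x: "x = Fract a b" and b: "b \<noteq> 0"
      have ee: "Fract a 1 = Fract a b * Fract b 1" using b by (simp add: eq_fract)
      have "D' (Fract a b * Fract b 1) = Fract a b * D' (Fract b 1) + D' (Fract a b) * Fract b 1"
        using H by blast
      then have "D' (Fract a 1) = Fract a b * D' (Fract b 1) + D' (Fract a b) * Fract b 1"
        by (simp only: ee[symmetric])
      then have e: "D' x * Fract b 1 = Fract (D a) 1 - Fract a b * Fract (D b) 1"
        using H x by (simp add: algebra_simps)
      have "fract_deriv D x * Fract b 1 = Fract (D a) 1 - Fract a b * Fract (D b) 1"
        using x b by (simp add: fract_deriv_Fract eq_fract algebra_simps)
      with e have "D' x * Fract b 1 = fract_deriv D x * Fract b 1" by simp
      moreover have "Fract b 1 \<noteq> 0" using b by (simp add: Zero_fract_def eq_fract)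
      ultimately show ?thesis by simp
    qed
  qed
qed

end

lemma leibniz_mapI: "is_derivation \<iota> D \<Longrightarrow> leibniz_map D"
  unfolding is_derivation_def leibniz_map_def by auto

lemma Fract_1_nonzero: "a \<noteq> 0 \<Longrightarrow> Fract a 1 \<noteq> 0"
  by (simp add: Zero_fract_def eq_fract)

lemma of_int_fract: "(of_int z :: 'a::idom fract) = Fract (of_int z) 1"
proof -
  obtain a b where "z = int a - int b" by (metis int_diff_cases)
  then show ?thesis by (simp add: of_nat_fract)
qed

section \<open>Graded algebras and the torus action\<close>

lemma character_add:
  assumes "\<forall>i. t i \<noteq> 0"
  shows "character (m + m') t = character m t * character m' t"
  unfolding character_def using assms by (simp add: power_int_add prod.distrib)

lemma character_nonzero: "\<forall>i. t i \<noteq> 0 \<Longrightarrow> character m t \<noteq> 0"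
  unfolding character_def by simp

locale graded_algebra =
  fixes \<iota> :: "'k::field_char_0 \<Rightarrow> 'a::idom"
    and Am :: "('n::finite \<Rightarrow> int) \<Rightarrow> 'a set"
  assumes k_algebra: "k_algebra_map \<iota>"
    and graded: "M_graded \<iota> Am"
begin

lemma iota_add: "\<iota> (x + y) = \<iota> x + \<iota> y" and iota_mult: "\<iota> (x * y) = \<iota> x * \<iota> y"
  and iota_0: "\<iota> 0 = 0" and iota_1: "\<iota> 1 = 1" and iota_inj: "inj \<iota>"
  using k_algebra unfolding k_algebra_map_def by auto

lemma iota_minus: "\<iota> (- x) = - \<iota> x"
proof -
  have "\<iota> (- x) + \<iota> x = 0" using iota_add[of "-x" x] iota_0 by simp
  thus ?thesis by (simp add: eq_neg_iff_add_eq_0)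
qed

lemma iota_of_nat: "\<iota> (of_nat n) = of_nat n"
  by (induct n) (simp_all add: iota_0 iota_1 iota_add)

lemma iota_diff: "\<iota> (x - y) = \<iota> x - \<iota> y"
  using iota_add[of x "-y"] iota_minus[of y] by simp

lemma iota_of_int: "\<iota> (of_int z) = of_int z"
proof -
  obtain a b where "z = int a - int b" by (metis int_diff_cases)
  then show ?thesis by (simp add: iota_diff iota_of_nat)
qed

lemma iota_eq_0_iff: "\<iota> x = 0 \<longleftrightarrow> x = 0"
  using iota_inj iota_0 by (metis injD)

lemma of_int_eq_0_iff: "(of_int z :: 'a) = 0 \<longleftrightarrow> z = 0"
  using iota_eq_0_iff[of "of_int z"] by (simp add: iota_of_int)

lemma zero_in: "0 \<in> Am m"
  and add_in: "x \<in> Am m \<Longrightarrow> y \<in> Am m \<Longrightarrow> x + y \<in> Am m"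
  and smult_in: "x \<in> Am m \<Longrightarrow> \<iota> c * x \<in> Am m"
  and mult_in: "x \<in> Am m \<Longrightarrow> y \<in> Am m' \<Longrightarrow> x * y \<in> Am (m + m')"
  and iota_in: "\<iota> c \<in> Am 0"
  using graded unfolding M_graded_def by auto

lemma decomp_ex1: "\<exists>!c. finite {m. c m \<noteq> 0} \<and> (\<forall>m. c m \<in> Am m) \<and> a = (\<Sum>m\<in>{m. c m \<noteq> 0}. c m)"
  using graded unfolding M_graded_def by auto

lemma neg_in: "x \<in> Am m \<Longrightarrow> - x \<in> Am m"
  using smult_in[of x m "-1"] by (simp add: iota_minus iota_1)

lemma diff_in: "x \<in> Am m \<Longrightarrow> y \<in> Am m \<Longrightarrow> x - y \<in> Am m"
  using add_in neg_in by (metis diff_conv_add_uminus)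

lemma one_in: "1 \<in> Am 0" using iota_in[of 1] iota_1 by simp

lemma sum_in: "finite S \<Longrightarrow> (\<And>i. i \<in> S \<Longrightarrow> f i \<in> Am m) \<Longrightarrow> sum f S \<in> Am m"
  by (induct S rule: finite_induct) (auto intro: zero_in add_in)

lemma hcomp_prop: "finite {m. hcomp Am a m \<noteq> 0} \<and> (\<forall>m. hcomp Am a m \<in> Am m) \<and>
      a = (\<Sum>m\<in>{m. hcomp Am a m \<noteq> 0}. hcomp Am a m)"
  unfolding hcomp_def by (rule theI'[OF decomp_ex1])

lemma hcomp_unique:
  assumes "finite {m. c m \<noteq> 0}" "\<forall>m. c m \<in> Am m" "a = (\<Sum>m\<in>{m. c m \<noteq> 0}. c m)"
  shows "hcomp Am a = c"
  unfolding hcomp_def by (rule the1_equality[OF decomp_ex1]) (use assms in auto)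

lemma hcomp_in: "hcomp Am a m \<in> Am m" using hcomp_prop by auto
lemma hcomp_fin: "finite {m. hcomp Am a m \<noteq> 0}" using hcomp_prop by auto
lemma hcomp_sum: "a = (\<Sum>m\<in>{m. hcomp Am a m \<noteq> 0}. hcomp Am a m)" using hcomp_prop by auto

lemma hcomp_sum_superset: "finite S \<Longrightarrow> {m. hcomp Am a m \<noteq> 0} \<subseteq> S \<Longrightarrow> a = (\<Sum>m\<in>S. hcomp Am a m)"
proof -
  assume "finite S" "{m. hcomp Am a m \<noteq> 0} \<subseteq> S"
  then have "(\<Sum>m\<in>S. hcomp Am a m) = (\<Sum>m\<in>{m. hcomp Am a m \<noteq> 0}. hcomp Am a m)"
    by (intro sum.mono_neutral_right) auto
  then show ?thesis using hcomp_sum[of a] by simp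
qed

lemma hcomp_of_sum:
  assumes fin: "finite I" and hz: "\<And>i. i \<in> I \<Longrightarrow> z i \<in> Am (d i)"
  shows "hcomp Am (\<Sum>i\<in>I. z i) = (\<lambda>m. \<Sum>i\<in>{i\<in>I. d i = m}. z i)"
proof (rule hcomp_unique)
  let ?c = "\<lambda>m. \<Sum>i\<in>{i\<in>I. d i = m}. z i"
  have sub: "{m. ?c m \<noteq> 0} \<subseteq> d ` I"
  proof
    fix m assume "m \<in> {m. ?c m \<noteq> 0}"
    then have "{i\<in>I. d i = m} \<noteq> {}" by (intro notI) simp
    then show "m \<in> d ` I" by auto
  qed
  show "finite {m. ?c m \<noteq> 0}" using finite_subset[OF sub] fin by auto
  show "\<forall>m. ?c m \<in> Am m"
    using fin hz by (auto intro!: sum_in)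
  have "(\<Sum>i\<in>I. z i) = (\<Sum>m\<in>d ` I. ?c m)"
    using sum.image_gen[OF fin, of z d] by simp
  also have "\<dots> = (\<Sum>m\<in>{m. ?c m \<noteq> 0}. ?c m)"
    using sub fin by (intro sum.mono_neutral_right) auto
  finally show "(\<Sum>i\<in>I. z i) = (\<Sum>m\<in>{m. ?c m \<noteq> 0}. ?c m)" .
qed

lemma hcomp_hom:
  assumes "a \<in> Am m"
  shows "hcomp Am a = (\<lambda>m'. if m' = m then a else 0)"
proof -
  have "hcomp Am (\<Sum>i\<in>{()}. a) = (\<lambda>m'. \<Sum>i\<in>{i\<in>{()}. m = m'}. a)"
    by (rule hcomp_of_sum) (use assms in auto)
  then show ?thesis by (auto intro!: ext)
qed

lemma hcomp_zero: "hcomp Am 0 = (\<lambda>_. 0)"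
  using hcomp_hom[OF zero_in[of 0]] by auto

lemma hcomp_add: "hcomp Am (a + b) m = hcomp Am a m + hcomp Am b m"
proof -
  let ?S = "{m. hcomp Am a m \<noteq> 0} \<union> {m. hcomp Am b m \<noteq> 0}"
  have fin: "finite ?S" using hcomp_fin by auto
  have "a + b = (\<Sum>m\<in>?S. hcomp Am a m + hcomp Am b m)"
    using hcomp_sum_superset[OF fin, of a] hcomp_sum_superset[OF fin, of b]
    by (simp add: sum.distrib)
  also have "hcomp Am \<dots> = (\<lambda>m'. \<Sum>i\<in>{i\<in>?S. i = m'}. hcomp Am a i + hcomp Am b i)"
    by (rule hcomp_of_sum[OF fin]) (auto intro: add_in hcomp_in)
  finally show ?thesis
    by (cases "m \<in> ?S") (auto simp: Collect_conv_if)
qed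

lemma weights_iff: "m \<in> weights Am \<longleftrightarrow> (\<exists>a\<in>Am m. a \<noteq> 0)"
  unfolding weights_def using zero_in by auto

lemma weights_add: "m \<in> weights Am \<Longrightarrow> m' \<in> weights Am \<Longrightarrow> m + m' \<in> weights Am"
proof -
  assume "m \<in> weights Am" "m' \<in> weights Am"
  then obtain a b where "a \<in> Am m" "a \<noteq> 0" "b \<in> Am m'" "b \<noteq> 0" unfolding weights_iff by auto
  then have "a * b \<in> Am (m + m')" "a * b \<noteq> 0" using mult_in by auto
  then show ?thesis unfolding weights_iff by blast
qed

lemma zero_in_weights: "0 \<in> weights Am"
  unfolding weights_iff using one_in by (metis one_neq_zero)

lemma weightsI: "a \<in> Am m \<Longrightarrow> a \<noteq> 0 \<Longrightarrow> m \<in> weights Am"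
  unfolding weights_iff by auto

lemma vanish_on_hom:
  fixes Z :: "'a \<Rightarrow> 'a"
  assumes add: "\<And>x y. Z (x + y) = Z x + Z y"
    and h: "\<And>m a. a \<in> Am m \<Longrightarrow> Z a = 0"
  shows "Z = (\<lambda>_. 0)"
proof
  fix a
  have "Z 0 = Z 0 + Z 0" using add[of 0 0] by simp
  then have z0: "Z 0 = 0" by (simp only: add_cancel_right_right)
  have sumZ: "finite S \<Longrightarrow> Z (\<Sum>m\<in>S. f m) = (\<Sum>m\<in>S. Z (f m))" for S and f :: "('n\<Rightarrow>int) \<Rightarrow> 'a"
    by (induct S rule: finite_induct) (auto simp: z0 add)
  have "Z a = Z (\<Sum>m\<in>{m. hcomp Am a m \<noteq> 0}. hcomp Am a m)" using hcomp_sum[of a] by simp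
  also have "\<dots> = (\<Sum>m\<in>{m. hcomp Am a m \<noteq> 0}. Z (hcomp Am a m))" by (rule sumZ[OF hcomp_fin])
  also have "\<dots> = 0" using h[OF hcomp_in] by (intro sum.neutral) simp
  finally show "Z a = 0" .
qed

lemma torus_act_sum:
  assumes fin: "finite I" and hz: "\<And>i. i \<in> I \<Longrightarrow> z i \<in> Am (d i)"
  shows "torus_act \<iota> Am t (\<Sum>i\<in>I. z i) = (\<Sum>i\<in>I. \<iota> (character (d i) t) * z i)"
proof -
  let ?c = "\<lambda>m. \<Sum>i\<in>{i\<in>I. d i = m}. z i"
  have hc: "hcomp Am (\<Sum>i\<in>I. z i) = ?c" by (rule hcomp_of_sum[OF fin hz])
  have sub: "{m. ?c m \<noteq> 0} \<subseteq> d ` I"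
  proof
    fix m assume "m \<in> {m. ?c m \<noteq> 0}"
    then have "{i\<in>I. d i = m} \<noteq> {}" by (intro notI) simp
    then show "m \<in> d ` I" by auto
  qed
  have "torus_act \<iota> Am t (\<Sum>i\<in>I. z i) = (\<Sum>m\<in>{m. ?c m \<noteq> 0}. \<iota> (character m t) * ?c m)"
    unfolding torus_act_def hc ..
  also have "\<dots> = (\<Sum>m\<in>d ` I. \<iota> (character m t) * ?c m)"
    using sub fin by (intro sum.mono_neutral_left) auto
  also have "\<dots> = (\<Sum>m\<in>d ` I. \<Sum>i\<in>{i\<in>I. d i = m}. \<iota> (character (d i) t) * z i)"
    by (rule sum.cong) (auto simp: sum_distrib_left)
  also have "\<dots> = (\<Sum>i\<in>I. \<iota> (character (d i) t) * z i)"
    using sum.image_gen[OF fin, of "\<lambda>i. \<iota> (character (d i) t) * z i" d] by simp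
  finally show ?thesis .
qed

lemma torus_act_hom: "a \<in> Am m \<Longrightarrow> torus_act \<iota> Am t a = \<iota> (character m t) * a"
  using torus_act_sum[of "{()}" "\<lambda>_. a" "\<lambda>_. m" t] by simp

lemma torus_act_mult:
  assumes t: "\<forall>i. t i \<noteq> 0"
  shows "torus_act \<iota> Am t (a * b) = torus_act \<iota> Am t a * torus_act \<iota> Am t b"
proof -
  let ?Sa = "{m. hcomp Am a m \<noteq> 0}" and ?Sb = "{m. hcomp Am b m \<noteq> 0}"
  have fa: "finite ?Sa" and fb: "finite ?Sb" using hcomp_fin by auto
  have "a * b = (\<Sum>m\<in>?Sa. hcomp Am a m) * (\<Sum>m\<in>?Sb. hcomp Am b m)"
    using hcomp_sum[of a] hcomp_sum[of b] by simp
  also have "\<dots> = (\<Sum>p\<in>?Sa \<times> ?Sb. hcomp Am a (fst p) * hcomp Am b (snd p))"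
    by (simp add: sum_product sum.cartesian_product case_prod_beta)
  finally have ab: "a * b = (\<Sum>p\<in>?Sa \<times> ?Sb. hcomp Am a (fst p) * hcomp Am b (snd p))" .
  have "torus_act \<iota> Am t (a * b) =
      (\<Sum>p\<in>?Sa \<times> ?Sb. \<iota> (character (fst p + snd p) t) * (hcomp Am a (fst p) * hcomp Am b (snd p)))"
    unfolding ab by (rule torus_act_sum) (use fa fb in \<open>auto intro: mult_in hcomp_in\<close>)
  also have "\<dots> = (\<Sum>p\<in>?Sa \<times> ?Sb. (\<iota> (character (fst p) t) * hcomp Am a (fst p)) *
                    (\<iota> (character (snd p) t) * hcomp Am b (snd p)))"
    by (rule sum.cong) (auto simp: character_add[OF t] iota_mult algebra_simps)
  also have "\<dots> = (\<Sum>m\<in>?Sa. \<iota> (character m t) * hcomp Am a m) * (\<Sum>m\<in>?Sb. \<iota> (character m t) * hcomp Am b m)"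
    by (simp add: sum_product sum.cartesian_product case_prod_beta)
  finally show ?thesis by (simp add: torus_act_def)
qed

lemma torus_act_nonzero:
  assumes t: "\<forall>i. t i \<noteq> 0" and b: "b \<noteq> 0"
  shows "torus_act \<iota> Am t b \<noteq> 0"
proof
  assume z: "torus_act \<iota> Am t b = 0"
  let ?Sb = "{m. hcomp Am b m \<noteq> 0}"
  have fb: "finite ?Sb" using hcomp_fin by auto
  have "?Sb \<noteq> {}"
  proof
    assume "?Sb = {}"
    then have "b = 0" using hcomp_sum[of b] by simp
    then show False using b by simp
  qed
  then obtain m where m: "hcomp Am b m \<noteq> 0" by auto
  have "hcomp Am (torus_act \<iota> Am t b) = (\<lambda>m'. \<Sum>i\<in>{i\<in>?Sb. i = m'}. \<iota> (character i t) * hcomp Am b i)"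
    unfolding torus_act_def by (rule hcomp_of_sum[OF fb]) (auto intro: smult_in hcomp_in)
  then have "hcomp Am (torus_act \<iota> Am t b) m = \<iota> (character m t) * hcomp Am b m"
    using m by (simp add: Collect_conv_if)
  then have "\<iota> (character m t) * hcomp Am b m = 0" using z hcomp_zero by simp
  then show False using m character_nonzero[OF t, of m] iota_eq_0_iff by simp
qed

lemma Fract_homogeneous_invariant:
  assumes a: "a \<in> Am m" and b: "b \<in> Am m" and b0: "b \<noteq> 0"
  shows "Fract a b \<in> invariant_field \<iota> Am"
  unfolding invariant_field_def
proof (intro CollectI allI impI)
  fix t :: "'n \<Rightarrow> 'k" and a' b'
  assume t: "\<forall>i. t i \<noteq> 0" and b': "b' \<noteq> 0" and eq: "Fract a b = Fract a' b'"
  have E: "a * b' = a' * b" using eq b0 b' by (simp add: eq_fract)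
  let ?T = "torus_act \<iota> Am t" and ?c = "\<iota> (character m t)"
  have c0: "?c \<noteq> 0" using character_nonzero[OF t] iota_eq_0_iff by simp
  have "?T (a * b') = ?T (a' * b)" using E by simp
  then have "?T a * ?T b' = ?T a' * ?T b" by (simp only: torus_act_mult[OF t])
  then have "?c * (a * ?T b') = ?c * (?T a' * b)"
    using torus_act_hom[OF a] torus_act_hom[OF b] by (simp add: algebra_simps)
  then have E2: "a * ?T b' = ?T a' * b" using c0 by simp
  have Tb: "?T b' \<noteq> 0" using torus_act_nonzero[OF t b'] .
  have "b * (?T a' * b') = b * (a' * ?T b')"
  proof -
    have "b * (?T a' * b') = b' * (?T a' * b)" by (simp add: algebra_simps)
    also have "\<dots> = b' * (a * ?T b')" using E2 by simp
    also have "\<dots> = (a * b') * ?T b'" by (simp add: algebra_simps)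
    also have "\<dots> = b * (a' * ?T b')" using E by (simp add: algebra_simps)
    finally show ?thesis .
  qed
  then have "?T a' * b' = a' * ?T b'" using b0 by simp
  then have "Fract (?T a') (?T b') = Fract a' b'"
    using Tb b' by (simp add: eq_fract)
  then show "Fract (?T a') (?T b') = Fract a b" using eq by simp
qed

lemma fiber_type_homogeneous:
  assumes der: "is_derivation \<iota> D" and fib: "fiber_type \<iota> Am D"
    and a: "a \<in> Am m" and b: "b \<in> Am m" and b0: "b \<noteq> 0"
  shows "D a * b = a * D b"
proof -
  interpret leibniz_map D by (rule leibniz_mapI[OF der])
  have "fract_ext D (Fract a b) = 0"
    using fib Fract_homogeneous_invariant[OF a b b0] unfolding fiber_type_def by blast
  then have "Fract (D a * b - a * D b) (b * b) = 0"
    using fract_ext_eq_fract_deriv fract_deriv_Fract[OF b0] by simp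
  then have "D a * b - a * D b = 0" using b0 by (simp add: Zero_fract_def eq_fract)
  then show ?thesis by simp
qed

lemma of_int_fract_inj: "(of_int x :: 'a fract) = of_int y \<Longrightarrow> x = y"
proof -
  assume "(of_int x :: 'a fract) = of_int y"
  then have "(of_int x :: 'a) = of_int y" by (simp add: of_int_fract eq_fract)
  then have "(of_int (x - y) :: 'a) = 0" by simp
  then have "x - y = 0" using of_int_eq_0_iff[of "x - y"] by blast
  then show "x = y" by simp
qed

lemma of_int_fract_nonzero: "z \<noteq> 0 \<Longrightarrow> (of_int z :: 'a fract) \<noteq> 0"
  using of_int_fract_inj[of z 0] by auto

lemma weights_nat_mult: "x \<in> weights Am \<Longrightarrow> (\<lambda>i. int n * x i) \<in> weights Am"
proof (induct n)
  case 0
  have e: "(\<lambda>i. int 0 * x i) = 0" by (simp add: fun_eq_iff)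
  show ?case using zero_in_weights by (simp only: e)
next
  case (Suc n)
  have e: "(\<lambda>i. int (Suc n) * x i) = x + (\<lambda>i. int n * x i)" by (simp add: fun_eq_iff algebra_simps)
  show ?case using weights_add[OF Suc(2) Suc(1)[OF Suc(2)]] by (simp only: e)
qed

lemma weights_nat_comb:
  "finite F \<Longrightarrow> (\<And>s. s \<in> F \<Longrightarrow> s \<in> weights Am) \<Longrightarrow> (\<lambda>i. \<Sum>s\<in>F. int (k s) * s i) \<in> weights Am"
proof (induct F rule: finite_induct)
  case empty
  have e: "(\<lambda>i. \<Sum>s\<in>{}. int (k s) * s i) = 0" by (simp add: fun_eq_iff)
  show ?case using zero_in_weights by (simp only: e)
next
  case (insert x F)
  have e: "(\<lambda>i. \<Sum>s\<in>insert x F. int (k s) * s i) = (\<lambda>i. int (k x) * x i) + (\<lambda>i. \<Sum>s\<in>F. int (k s) * s i)"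
    using insert(1,2) by (simp add: fun_eq_iff)
  show ?case using weights_add[OF weights_nat_mult insert(3)] insert(4) by (simp only: e) auto
qed

lemma effective_diff_weights:
  assumes eff: "effective_grading Am"
  shows "\<exists>u v. u \<in> weights Am \<and> v \<in> weights Am \<and> m = u - v"
proof -
  obtain F c where F: "finite F" "F \<subseteq> weights Am" and m: "m = (\<lambda>i. \<Sum>s\<in>F. c s * s i)"
    using eff unfolding effective_grading_def by blast
  let ?u = "\<lambda>i. \<Sum>s\<in>F. int (nat (c s)) * s i" and ?v = "\<lambda>i. \<Sum>s\<in>F. int (nat (- c s)) * s i"
  have w: "\<And>s. s \<in> F \<Longrightarrow> s \<in> weights Am" using F(2) by auto
  have "?u \<in> weights Am" "?v \<in> weights Am" using weights_nat_comb[OF F(1) w, of "\<lambda>s. nat (c s)"]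
      weights_nat_comb[OF F(1) w, of "\<lambda>s. nat (- c s)"] by simp_all
  moreover have "m = ?u - ?v"
  proof
    fix i
    have "m i = (\<Sum>s\<in>F. (int (nat (c s)) - int (nat (- c s))) * s i)"
      unfolding m by (intro sum.cong) auto
    then show "m i = (?u - ?v) i" by (simp add: sum_subtractf left_diff_distrib)
  qed
  ultimately show ?thesis by blast
qed

end

section \<open>Operators on \<open>A\<close> and their Lie brackets\<close>

definition lie_bracket :: "('a::ab_group_add \<Rightarrow> 'a) \<Rightarrow> ('a \<Rightarrow> 'a) \<Rightarrow> 'a \<Rightarrow> 'a" where
  "lie_bracket X Y = (\<lambda>x. X (Y x) - Y (X x))"

lemma lie_bracket_antisym: "lie_bracket X Y = (\<lambda>x. - lie_bracket Y X x)"
  unfolding lie_bracket_def by simp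

lemma lie_bracket_self: "lie_bracket X X = (\<lambda>_. 0)"
  unfolding lie_bracket_def by simp

context graded_algebra
begin

text \<open>Fiber type derivations are of this form with \<open>f\<close> linear (\<open>fiber_type_weight_form\<close>).\<close>
definition acts_as :: "('a \<Rightarrow> 'a) \<Rightarrow> ('n \<Rightarrow> int) \<Rightarrow> (('n \<Rightarrow> int) \<Rightarrow> int) \<Rightarrow> 'a fract \<Rightarrow> bool" where
  "acts_as Z d f u \<longleftrightarrow> (\<forall>m a. a \<in> Am m \<longrightarrow> Z a \<in> Am (m + d) \<and> Fract (Z a) 1 = of_int (f m) * u * Fract a 1)"

definition k_linear :: "('a \<Rightarrow> 'a) \<Rightarrow> bool" where
  "k_linear Z \<longleftrightarrow> (\<forall>x y. Z (x + y) = Z x + Z y) \<and> (\<forall>c x. Z (\<iota> c * x) = \<iota> c * Z x)"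

definition k_span :: "('a \<Rightarrow> 'a) set \<Rightarrow> ('a \<Rightarrow> 'a) set" where
  "k_span B = {Z. \<exists>c. Z = (\<lambda>x. \<Sum>b\<in>B. \<iota> (c b) * b x)}"

lemma k_linear_add: "k_linear Z \<Longrightarrow> Z (x + y) = Z x + Z y" unfolding k_linear_def by blast
lemma k_linear_smult: "k_linear Z \<Longrightarrow> Z (\<iota> c * x) = \<iota> c * Z x" unfolding k_linear_def by blast
lemma k_linear_0: "k_linear Z \<Longrightarrow> Z 0 = 0"
proof -
  assume l: "k_linear Z"
  have "Z 0 = Z 0 + Z 0" using k_linear_add[OF l, of 0 0] by simp
  then show ?thesis by (simp only: add_cancel_right_right)
qed
lemma k_linear_sum:
  assumes "k_linear Z" "finite S"
  shows "Z (\<Sum>i\<in>S. f i) = (\<Sum>i\<in>S. Z (f i))"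
  using assms(2)
    by (induct S rule: finite_induct) (auto simp: k_linear_0[OF assms(1)] k_linear_add[OF assms(1)])
lemma k_linear_derivation: "is_derivation \<iota> D \<Longrightarrow> k_linear D"
  unfolding is_derivation_def k_linear_def by auto

lemma k_linear_lie_bracket: "k_linear X \<Longrightarrow> k_linear Y \<Longrightarrow> k_linear (lie_bracket X Y)"
  unfolding k_linear_def lie_bracket_def by (simp add: algebra_simps)

lemma iota_sum: "finite S \<Longrightarrow> \<iota> (\<Sum>i\<in>S. f i) = (\<Sum>i\<in>S. \<iota> (f i))"
  by (induct S rule: finite_induct) (auto simp: iota_0 iota_add)

lemma k_linear_k_span:
  assumes "finite B" "\<And>b. b \<in> B \<Longrightarrow> k_linear b" "Z \<in> k_span B"
  shows "k_linear Z"
proof -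
  obtain c where c: "Z = (\<lambda>x. \<Sum>b\<in>B. \<iota> (c b) * b x)" using assms(3) unfolding k_span_def by blast
  have "Z (x + y) = Z x + Z y" for x y
  proof -
    have "Z (x + y) = (\<Sum>b\<in>B. \<iota> (c b) * b x + \<iota> (c b) * b y)"
      unfolding c by (intro sum.cong refl) (simp add: k_linear_add[OF assms(2)] distrib_left)
    then show ?thesis unfolding c by (simp add: sum.distrib)
  qed
  moreover have "Z (\<iota> k * x) = \<iota> k * Z x" for k x
  proof -
    have "Z (\<iota> k * x) = (\<Sum>b\<in>B. \<iota> k * (\<iota> (c b) * b x))"
      unfolding c by (intro sum.cong refl) (simp add: k_linear_smult[OF assms(2)] mult.left_commute)
    then show ?thesis unfolding c by (simp add: sum_distrib_left)
  qed
  ultimately show ?thesis unfolding k_linear_def by blast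
qed

lemma k_span_mem:
  assumes "b0 \<in> B" "finite B"
  shows "b0 \<in> k_span B"
  unfolding k_span_def
proof (intro CollectI exI[of _ "\<lambda>b. if b = b0 then 1 else 0"] ext)
  fix x
  have "(\<Sum>b\<in>B. \<iota> (if b = b0 then 1 else 0) * b x) = (\<Sum>b\<in>B. if b = b0 then b x else 0)"
    by (rule sum.cong) (auto simp: iota_0 iota_1)
  also have "\<dots> = b0 x" using assms by (simp add: sum.delta')
  finally show "b0 x = (\<Sum>b\<in>B. \<iota> (if b = b0 then 1 else 0) * b x)" by simp
qed

lemma k_span_zero: "(\<lambda>_. 0) \<in> k_span B"
  unfolding k_span_def by (intro CollectI exI[of _ "\<lambda>_. 0"]) (simp add: iota_0)

lemma k_span_neg:
  assumes "Z \<in> k_span B"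
  shows "(\<lambda>x. - Z x) \<in> k_span B"
proof -
  obtain c where "Z = (\<lambda>x. \<Sum>b\<in>B. \<iota> (c b) * b x)" using assms unfolding k_span_def by blast
  then show ?thesis unfolding k_span_def
    by (intro CollectI exI[of _ "\<lambda>b. - c b"]) (simp add: iota_minus sum_negf)
qed

lemma k_span_add:
  assumes "Z \<in> k_span B" "Z' \<in> k_span B"
  shows "(\<lambda>x. Z x + Z' x) \<in> k_span B"
proof -
  obtain c c' where "Z = (\<lambda>x. \<Sum>b\<in>B. \<iota> (c b) * b x)" "Z' = (\<lambda>x. \<Sum>b\<in>B. \<iota> (c' b) * b x)"
    using assms unfolding k_span_def by blast
  then show ?thesis unfolding k_span_def
    by (intro CollectI exI[of _ "\<lambda>b. c b + c' b"]) (simp add: iota_add sum.distrib distrib_right)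
qed

lemma k_span_smult:
  assumes "Z \<in> k_span B"
  shows "(\<lambda>x. \<iota> k * Z x) \<in> k_span B"
proof -
  obtain c where "Z = (\<lambda>x. \<Sum>b\<in>B. \<iota> (c b) * b x)" using assms unfolding k_span_def by blast
  then show ?thesis unfolding k_span_def
    by (intro CollectI exI[of _ "\<lambda>b. k * c b"]) (simp add: iota_mult sum_distrib_left mult.assoc)
qed

lemma k_span_lie_bracket:
  assumes fin: "finite B" and linB: "\<And>b. b \<in> B \<Longrightarrow> k_linear b"
    and closed: "\<And>b b'. b \<in> B \<Longrightarrow> b' \<in> B \<Longrightarrow> lie_bracket b b' \<in> k_span B"
    and D: "D \<in> k_span B" and E: "E \<in> k_span B"
  shows "lie_bracket D E \<in> k_span B"
proof -
  define \<gamma> where "\<gamma> b b' = (SOME c. lie_bracket b b' = (\<lambda>x. \<Sum>b''\<in>B. \<iota> (c b'') * b'' x))" for b b'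
  have \<gamma>: "lie_bracket b b' = (\<lambda>x. \<Sum>b''\<in>B. \<iota> (\<gamma> b b' b'') * b'' x)" if "b \<in> B" "b' \<in> B" for b b'
  proof -
    have "\<exists>c. lie_bracket b b' = (\<lambda>x. \<Sum>b''\<in>B. \<iota> (c b'') * b'' x)"
      using closed[OF that] unfolding k_span_def by blast
    then show ?thesis unfolding \<gamma>_def by (rule someI_ex)
  qed
  obtain c c' where c: "D = (\<lambda>x. \<Sum>b\<in>B. \<iota> (c b) * b x)" and c': "E = (\<lambda>x. \<Sum>b\<in>B. \<iota> (c' b) * b x)"
    using D E unfolding k_span_def by blast
  let ?k = "\<lambda>b''. \<Sum>b\<in>B. \<Sum>b'\<in>B. c b * c' b' * \<gamma> b b' b''"
  show ?thesis unfolding k_span_def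
  proof (intro CollectI exI[of _ ?k] ext)
    fix x
    have DE: "D (E x) = (\<Sum>b\<in>B. \<Sum>b'\<in>B. \<iota> (c b * c' b') * b (b' x))"
      unfolding c c' using fin linB
      by (simp add: k_linear_sum k_linear_smult sum_distrib_left iota_mult mult.assoc)
    have ED: "E (D x) = (\<Sum>b\<in>B. \<Sum>b'\<in>B. \<iota> (c b * c' b') * b' (b x))"
      unfolding c c' using fin linB
      by (subst sum.swap) (simp add: k_linear_sum k_linear_smult sum_distrib_left iota_mult mult.assoc mult.left_commute)
    have "lie_bracket D E x = (\<Sum>b\<in>B. \<Sum>b'\<in>B. \<iota> (c b * c' b') * lie_bracket b b' x)"
      unfolding DE ED lie_bracket_def by (simp add: sum_subtractf right_diff_distrib)
    also have "\<dots> = (\<Sum>b\<in>B. \<Sum>b'\<in>B. \<iota> (c b * c' b') * (\<Sum>b''\<in>B. \<iota> (\<gamma> b b' b'') * b'' x))"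
      using \<gamma> by (intro sum.cong refl) simp
    also have "\<dots> = (\<Sum>b\<in>B. \<Sum>b'\<in>B. \<Sum>b''\<in>B. \<iota> (c b * c' b' * \<gamma> b b' b'') * b'' x)"
      by (simp add: sum_distrib_left iota_mult mult.assoc)
    also have "\<dots> = (\<Sum>b\<in>B. \<Sum>b''\<in>B. \<Sum>b'\<in>B. \<iota> (c b * c' b' * \<gamma> b b' b'') * b'' x)"
      by (rule sum.cong[OF refl], rule sum.swap)
    also have "\<dots> = (\<Sum>b''\<in>B. \<Sum>b\<in>B. \<Sum>b'\<in>B. \<iota> (c b * c' b' * \<gamma> b b' b'') * b'' x)"
      by (rule sum.swap)
    also have "\<dots> = (\<Sum>b''\<in>B. \<iota> (?k b'') * b'' x)"
      using fin by (simp add: sum_distrib_right iota_sum)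
    finally show "lie_bracket D E x = (\<Sum>b''\<in>B. \<iota> (?k b'') * b'' x)" .
  qed
qed

lemma lie_gen_subset_k_span:
  assumes fin: "finite B" and linB: "\<And>b. b \<in> B \<Longrightarrow> k_linear b"
    and gens: "D1 \<in> k_span B" "D2 \<in> k_span B"
    and closed: "\<And>b b'. b \<in> B \<Longrightarrow> b' \<in> B \<Longrightarrow> lie_bracket b b' \<in> k_span B"
  shows "lie_gen \<iota> D1 D2 \<subseteq> k_span B"
proof
  fix Z assume "Z \<in> lie_gen \<iota> D1 D2"
  then show "Z \<in> k_span B"
  proof induct
    case (bracket D E)
    then show ?case using k_span_lie_bracket[OF fin linB closed] unfolding lie_bracket_def by blast
  qed (use gens k_span_add k_span_smult in auto)
qed

lemma acts_as_lie_bracket: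
  assumes X: "acts_as X d f u" and Y: "acts_as Y d' g v"
    and fa: "\<And>x y. f (x + y) = f x + f y" and ga: "\<And>x y. g (x + y) = g x + g y"
  shows "acts_as (lie_bracket X Y) (d + d') (\<lambda>m. f d' * g m - g d * f m) (u * v)"
  unfolding acts_as_def
proof (intro allI impI conjI)
  fix m a assume a: "a \<in> Am m"
  have Ya: "Y a \<in> Am (m + d')" and FYa: "Fract (Y a) 1 = of_int (g m) * v * Fract a 1"
    using Y a unfolding acts_as_def by auto
  have Xa: "X a \<in> Am (m + d)" and FXa: "Fract (X a) 1 = of_int (f m) * u * Fract a 1"
    using X a unfolding acts_as_def by auto
  have XYa: "X (Y a) \<in> Am (m + d' + d)" and FXYa: "Fract (X (Y a)) 1 = of_int (f (m + d')) * u * Fract (Y a) 1"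
    using X Ya unfolding acts_as_def by auto
  have YXa: "Y (X a) \<in> Am (m + d + d')" and FYXa: "Fract (Y (X a)) 1 = of_int (g (m + d)) * v * Fract (X a) 1"
    using Y Xa unfolding acts_as_def by auto
  have e1: "m + d' + d = m + (d + d')" and e2: "m + d + d' = m + (d + d')"
    by (simp_all only: ac_simps)
  show "lie_bracket X Y a \<in> Am (m + (d + d'))"
    unfolding lie_bracket_def using XYa YXa e1 e2 by (metis diff_in)
  have "Fract (lie_bracket X Y a) 1 = Fract (X (Y a)) 1 - Fract (Y (X a)) 1"
    unfolding lie_bracket_def by simp
  also have "\<dots> = of_int (f (m + d')) * u * (of_int (g m) * v * Fract a 1)
                 - of_int (g (m + d)) * v * (of_int (f m) * u * Fract a 1)"
    using FXYa FYXa FYa FXa by simp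
  also have "\<dots> = of_int (f d' * g m - g d * f m) * (u * v) * Fract a 1"
    by (simp add: fa ga algebra_simps)
  finally show "Fract (lie_bracket X Y a) 1 = of_int (f d' * g m - g d * f m) * (u * v) * Fract a 1" .
qed

lemma acts_as_zero:
  assumes l: "k_linear Z" and O: "acts_as Z d f u" and f0: "\<And>m. f m = 0"
  shows "Z = (\<lambda>_. 0)"
proof (rule vanish_on_hom)
  show "\<And>x y. Z (x + y) = Z x + Z y" by (rule k_linear_add[OF l])
  fix m a assume a: "a \<in> Am m"
  have "Fract (Z a) 1 = 0" using O a f0 unfolding acts_as_def by auto
  then show "Z a = 0" by (simp add: Zero_fract_def eq_fract)
qed

lemma acts_as_homogeneous: "acts_as Z d f u \<Longrightarrow> homogeneous_of_degree Am Z d"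
  unfolding acts_as_def homogeneous_of_degree_def by blast

lemma acts_as_cong:
  "acts_as Z d f u \<Longrightarrow> d = d' \<Longrightarrow> (\<And>m. f m = f' m) \<Longrightarrow> u = u' \<Longrightarrow> acts_as Z d' f' u'"
  unfolding acts_as_def by simp

inductive_set filt_below :: "(('n \<Rightarrow> int) \<Rightarrow> int) \<Rightarrow> int \<Rightarrow> 'a set"
  for \<phi> :: "('n \<Rightarrow> int) \<Rightarrow> int" and j :: int
  where
  zeroI: "0 \<in> filt_below \<phi> j"
| homI: "a \<in> Am m \<Longrightarrow> \<phi> m < j \<Longrightarrow> a \<in> filt_below \<phi> j"
| addI: "x \<in> filt_below \<phi> j \<Longrightarrow> y \<in> filt_below \<phi> j \<Longrightarrow> x + y \<in> filt_below \<phi> j"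

lemma filt_below_mono: "x \<in> filt_below \<phi> j \<Longrightarrow> j \<le> j' \<Longrightarrow> x \<in> filt_below \<phi> j'"
  by (induct rule: filt_below.induct) (auto intro: filt_below.intros)

lemma filt_below_nonpos:
  assumes pos: "\<And>m. m \<in> weights Am \<Longrightarrow> \<phi> m \<ge> 0"
  shows "x \<in> filt_below \<phi> j \<Longrightarrow> j \<le> 0 \<Longrightarrow> x = 0"
proof (induct rule: filt_below.induct)
  case zeroI then show ?case by simp
next
  case (homI a m)
  show ?case
  proof (rule ccontr)
    assume "a \<noteq> 0"
    then have "m \<in> weights Am" using homI weightsI by auto
    then show False using pos homI by fastforce
  qed
next
  case (addI x y) then show ?case by simp
qed

lemma filt_below_sum:
  "finite S \<Longrightarrow> (\<And>i. i \<in> S \<Longrightarrow> z i \<in> filt_below \<phi> j) \<Longrightarrow> (\<Sum>i\<in>S. z i) \<in> filt_below \<phi> j"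
  by (induct S rule: finite_induct) (auto intro: filt_below.intros)

lemma filt_below_exhaustive: "\<exists>j. a \<in> filt_below \<phi> j"
proof -
  let ?S = "{m. hcomp Am a m \<noteq> 0}"
  have fin: "finite ?S" by (rule hcomp_fin)
  let ?j = "(\<Sum>m\<in>?S. \<bar>\<phi> m\<bar>) + 1"
  have "(\<Sum>m\<in>?S. hcomp Am a m) \<in> filt_below \<phi> ?j"
  proof (rule filt_below_sum[OF fin])
    fix m assume m: "m \<in> ?S"
    have "\<phi> m \<le> \<bar>\<phi> m\<bar>" by simp
    also have "\<bar>\<phi> m\<bar> \<le> (\<Sum>m\<in>?S. \<bar>\<phi> m\<bar>)" by (rule member_le_sum[OF m _ fin]) simp
    finally show "hcomp Am a m \<in> filt_below \<phi> ?j" by (intro homI[OF hcomp_in]) simp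
  qed
  then show ?thesis using hcomp_sum[of a] by metis
qed

lemma locally_nilpotent_if_lowering:
  assumes add: "\<And>x y. E (x + y) = E x + E y"
    and pos: "\<And>m. m \<in> weights Am \<Longrightarrow> \<phi> m \<ge> 0"
    and low: "\<And>m a. a \<in> Am m \<Longrightarrow> E a \<in> filt_below \<phi> (\<phi> m)"
  shows "locally_nilpotent E"
  unfolding locally_nilpotent_def
proof
  fix a
  have E0: "E 0 = 0"
  proof -
    have "E 0 = E 0 + E 0" using add[of 0 0] by simp
    then show ?thesis by (simp only: add_cancel_right_right)
  qed
  have step: "x \<in> filt_below \<phi> (j + 1) \<Longrightarrow> E x \<in> filt_below \<phi> j" for x j
  proof (induct x rule: filt_below.induct)
    case zeroI then show ?case by (simp add: E0 filt_below.zeroI)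
  next
    case (homI a m) then show ?case using low[of a m] by (auto intro: filt_below_mono)
  next
    case (addI x y) then show ?case by (simp add: add filt_below.addI)
  qed
  have iter: "x \<in> filt_below \<phi> j \<Longrightarrow> (E ^^ n) x \<in> filt_below \<phi> (j - int n)" for x j n
  proof (induct n arbitrary: j x)
    case 0 then show ?case by simp
  next
    case (Suc n)
    have "E x \<in> filt_below \<phi> (j - 1)" using step[of x "j - 1"] Suc(2) by simp
    then have "(E ^^ n) (E x) \<in> filt_below \<phi> (j - 1 - int n)" by (rule Suc(1))
    moreover have eq: "j - int (Suc n) = j - 1 - int n" by simp
    ultimately show ?case by (simp only: funpow_Suc_right comp_def eq)
  qed
  obtain j where j: "a \<in> filt_below \<phi> j" using filt_below_exhaustive by blast
  have "(E ^^ nat j) a \<in> filt_below \<phi> (j - int (nat j))" by (rule iter[OF j])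
  then have "(E ^^ nat j) a = 0" using filt_below_nonpos[OF pos] by simp
  then show "\<exists>n. (E ^^ n) a = 0" by blast
qed

lemma k_span_locally_nilpotent:
  fixes \<phi> :: "('n \<Rightarrow> int) \<Rightarrow> int"
  assumes fin: "finite B" and linB: "\<And>b. b \<in> B \<Longrightarrow> k_linear b" and Z: "Z \<in> k_span B"
    and homB: "\<And>b. b \<in> B \<Longrightarrow> \<exists>d. homogeneous_of_degree Am b d \<and> \<phi> d < 0"
    and phiadd: "\<And>x y. \<phi> (x + y) = \<phi> x + \<phi> y"
    and pos: "\<And>m. m \<in> weights Am \<Longrightarrow> \<phi> m \<ge> 0"
  shows "locally_nilpotent Z"
proof (rule locally_nilpotent_if_lowering[where \<phi>=\<phi>])
  show "\<And>x y. Z (x + y) = Z x + Z y" using k_linear_k_span[OF fin linB Z] by (rule k_linear_add)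
  show "\<And>m. m \<in> weights Am \<Longrightarrow> \<phi> m \<ge> 0" by (rule pos)
  obtain c where c: "Z = (\<lambda>x. \<Sum>b\<in>B. \<iota> (c b) * b x)" using Z unfolding k_span_def by blast
  fix m a assume a: "a \<in> Am m"
  show "Z a \<in> filt_below \<phi> (\<phi> m)" unfolding c
  proof (rule filt_below_sum[OF fin])
    fix b assume b: "b \<in> B"
    obtain d where d: "homogeneous_of_degree Am b d" "\<phi> d < 0" using homB[OF b] by blast
    have "\<iota> (c b) * b a \<in> Am (m + d)"
      using d a unfolding homogeneous_of_degree_def by (auto intro: smult_in)
    moreover have "\<phi> (m + d) < \<phi> m" using d phiadd by simp
    ultimately show "\<iota> (c b) * b a \<in> filt_below \<phi> (\<phi> m)" by (rule homI)
  qed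
qed

lemma lie_gen_finite_dim_locally_nilpotent:
  fixes \<phi> :: "('n \<Rightarrow> int) \<Rightarrow> int"
  assumes fin: "finite B" and B: "B \<subseteq> lie_gen \<iota> D1 D2" and linB: "\<And>b. b \<in> B \<Longrightarrow> k_linear b"
    and gens: "D1 \<in> k_span B" "D2 \<in> k_span B"
    and closed: "\<And>b b'. b \<in> B \<Longrightarrow> b' \<in> B \<Longrightarrow> lie_bracket b b' \<in> k_span B"
    and lowering: "\<And>b. b \<in> B \<Longrightarrow> \<exists>d. homogeneous_of_degree Am b d \<and> \<phi> d < 0"
    and \<phi>_add: "\<And>x y. \<phi> (x + y) = \<phi> x + \<phi> y"
    and \<phi>_nonneg: "\<And>m. m \<in> weights Am \<Longrightarrow> \<phi> m \<ge> 0"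
  shows "finite_dim_k \<iota> (lie_gen \<iota> D1 D2) \<and> (\<forall>D\<in>lie_gen \<iota> D1 D2. locally_nilpotent D)"
proof
  have sub: "lie_gen \<iota> D1 D2 \<subseteq> k_span B" by (rule lie_gen_subset_k_span[OF fin linB gens closed])
  then show "finite_dim_k \<iota> (lie_gen \<iota> D1 D2)"
    unfolding finite_dim_k_def k_span_def using fin B by blast
  show "\<forall>D\<in>lie_gen \<iota> D1 D2. locally_nilpotent D"
    using sub k_span_locally_nilpotent[OF fin linB _ lowering \<phi>_add \<phi>_nonneg] by blast
qed

end

section \<open>Derivations of weight form\<close>

definition nat_scale :: "nat \<Rightarrow> ('n \<Rightarrow> int) \<Rightarrow> 'n \<Rightarrow> int" where
  "nat_scale j x = (\<lambda>i. int j * x i)"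

lemma nat_scale_0: "nat_scale 0 x = 0"
  unfolding nat_scale_def by (simp add: fun_eq_iff)

lemma nat_scale_Suc: "nat_scale (Suc j) x = nat_scale j x + x"
  unfolding nat_scale_def by (simp add: fun_eq_iff algebra_simps)

lemma additive_nat_scale:
  fixes P :: "('n \<Rightarrow> int) \<Rightarrow> int"
  assumes add: "\<And>x y. P (x + y) = P x + P y"
  shows "P (nat_scale j x) = int j * P x"
proof (induct j)
  case 0
  have "P 0 = P 0 + P 0" using add[of 0 0] by simp
  then have "P 0 = 0" by simp
  then show ?case by (simp only: nat_scale_0 of_nat_0 mult_zero_left)
next
  case (Suc j)
  show ?case by (simp only: nat_scale_Suc add Suc) (simp add: algebra_simps)
qed

locale lnd_weight_form = graded_algebra \<iota> Am
  for \<iota> :: "'k::field_char_0 \<Rightarrow> 'a::idom" and Am :: "('n::finite \<Rightarrow> int) \<Rightarrow> 'a set" +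
  fixes D :: "'a \<Rightarrow> 'a" and e :: "'n \<Rightarrow> int" and P :: "('n \<Rightarrow> int) \<Rightarrow> int" and w :: "'a fract"
  assumes linear: "k_linear D"
    and acts: "acts_as D e P w"
    and P_add: "P (x + y) = P x + P y"
    and P_nonneg: "m \<in> weights Am \<Longrightarrow> P m \<ge> 0"
    and P_degree: "P e = -1"
    and w_nonzero: "w \<noteq> 0"
    and P_positive: "\<exists>n\<in>weights Am. P n \<ge> 1"
begin

lemma weights_shift:
  assumes m: "m \<in> weights Am" and P: "P m \<noteq> 0"
  shows "m + e \<in> weights Am"
proof -
  obtain a where a: "a \<in> Am m" "a \<noteq> 0" using m unfolding weights_iff by blast
  have Da: "D a \<in> Am (m + e)" "Fract (D a) 1 = of_int (P m) * w * Fract a 1"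
    using acts a unfolding acts_as_def by auto
  have "Fract (D a) 1 \<noteq> 0"
    using Da(2) w_nonzero of_int_fract_nonzero[OF P] Fract_1_nonzero[OF a(2)] by simp
  then have "D a \<noteq> 0" by (auto simp: fract_collapse)
  then show ?thesis using Da(1) weightsI by blast
qed

lemma weights_chain: "m \<in> weights Am \<Longrightarrow> int j \<le> P m \<Longrightarrow> m + nat_scale j e \<in> weights Am"
proof (induct j)
  case 0 then show ?case by (simp only: nat_scale_0 add_0_right)
next
  case (Suc j)
  let ?m = "m + nat_scale j e"
  have m: "?m \<in> weights Am" by (rule Suc(1)[OF Suc(2)]) (use Suc(3) in simp)
  have "P ?m = P m - int j" using P_add additive_nat_scale[OF P_add] P_degree by simp
  then have "?m + e \<in> weights Am" using Suc(3) by (intro weights_shift[OF m]) simp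
  moreover have "?m + e = m + nat_scale (Suc j) e" by (simp only: nat_scale_Suc add.assoc)
  ultimately show ?case by (simp only:)
qed

lemma weights_chain_end:
  assumes m: "m \<in> weights Am"
  shows "m + nat_scale (nat (P m)) e \<in> weights Am" and "P (m + nat_scale (nat (P m)) e) = 0"
proof -
  have j: "int (nat (P m)) = P m" using P_nonneg[OF m] by simp
  show "m + nat_scale (nat (P m)) e \<in> weights Am" using weights_chain[OF m] j by simp
  show "P (m + nat_scale (nat (P m)) e) = 0"
    using P_add additive_nat_scale[OF P_add] j P_degree by simp
qed

lemma additive_nonneg_bound:
  assumes Q_add: "\<And>x y. Q (x + y) = Q x + Q y" and Q_nonneg: "\<And>m. m \<in> weights Am \<Longrightarrow> Q m \<ge> 0"
    and m: "m \<in> weights Am"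
  shows "Q m + P m * Q e \<ge> 0"
proof -
  have "Q (m + nat_scale (nat (P m)) e) \<ge> 0" using Q_nonneg weights_chain_end(1)[OF m] by blast
  then show ?thesis
    using Q_add additive_nat_scale[OF Q_add] P_nonneg[OF m] by (simp add: mult.commute)
qed

end
section \<open>Fiber type derivations have weight form\<close>

locale fiber_type_lnd = graded_algebra \<iota> Am
  for \<iota> :: "'k::field_char_0 \<Rightarrow> 'a::idom" and Am :: "('n::finite \<Rightarrow> int) \<Rightarrow> 'a set" +
  fixes D :: "'a \<Rightarrow> 'a" and e :: "'n \<Rightarrow> int"
  assumes der: "is_derivation \<iota> D" and nz: "D \<noteq> (\<lambda>_. 0)" and lnd: "locally_nilpotent D"
    and hom: "homogeneous_of_degree Am D e" and fib: "fiber_type \<iota> Am D"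
    and eff: "effective_grading Am"
begin

interpretation dl: leibniz_map D by (rule leibniz_mapI[OF der])

lemma D0: "D 0 = 0"
proof -
  have "D 0 = D 0 + D 0" using dl.Dadd[of 0 0] by simp
  then show ?thesis by (simp only: add_cancel_right_right)
qed

lemma D_hom: "a \<in> Am m \<Longrightarrow> D a \<in> Am (m + e)"
  using hom unfolding homogeneous_of_degree_def by blast

lemma Dpow_hom: "a \<in> Am m \<Longrightarrow> (D ^^ k) a \<in> Am (m + of_nat k * e)"
proof (induct k)
  case 0 then show ?case by simp
next
  case (Suc k)
  have e: "m + of_nat (Suc k) * e = (m + of_nat k * e) + e" by (simp add: algebra_simps)
  show ?case using D_hom[OF Suc(1)[OF Suc(2)]] by (simp only: e funpow.simps comp_def)
qed

text \<open>The logarithmic derivative \<open>D a / a\<close> does not depend on the choice of \<open>a\<close> in \<open>A\<^sub>m\<close>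
  (\<open>fiber_type_homogeneous\<close>).\<close>
definition dlog :: "('n \<Rightarrow> int) \<Rightarrow> 'a fract" where
  "dlog m = (let a = (SOME a. a \<in> Am m \<and> a \<noteq> 0) in Fract (D a) a)"

lemma dlog_eq:
  assumes a: "a \<in> Am m" "a \<noteq> 0"
  shows "dlog m = Fract (D a) a"
proof -
  let ?b = "SOME a. a \<in> Am m \<and> a \<noteq> 0"
  have b: "?b \<in> Am m" "?b \<noteq> 0" using someI[of "\<lambda>a. a \<in> Am m \<and> a \<noteq> 0" a] a by auto
  have "D a * ?b = a * D ?b" by (rule fiber_type_homogeneous[OF der fib a(1) b(1) b(2)])
  then have "Fract (D ?b) ?b = Fract (D a) a" using a b by (simp add: eq_fract algebra_simps)
  then show ?thesis unfolding dlog_def Let_def by simp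
qed

lemma Fract_D_dlog:
  assumes a: "a \<in> Am m"
  shows "Fract (D a) 1 = dlog m * Fract a 1"
proof (cases "a = 0")
  case True then show ?thesis by (simp add: D0 fract_collapse)
next
  case False
  then have "dlog m * Fract a 1 = Fract (D a * a) (a * 1)" using dlog_eq[OF a False] by simp
  also have "\<dots> = Fract (D a) 1"
    using False mult_fract_cancel[of a "D a" 1] by (simp add: mult.commute)
  finally show ?thesis by simp
qed

lemma dlog_add:
  assumes "m \<in> weights Am" "m' \<in> weights Am"
  shows "dlog (m + m') = dlog m + dlog m'"
proof -
  obtain a a' where a: "a \<in> Am m" "a \<noteq> 0" and a': "a' \<in> Am m'" "a' \<noteq> 0"
    using assms unfolding weights_iff by blast
  have aa: "a * a' \<in> Am (m + m')" "a * a' \<noteq> 0" using a a' mult_in by auto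
  show ?thesis using dlog_eq[OF aa] dlog_eq[OF a] dlog_eq[OF a'] a a'
    by (simp add: dl.Dmul eq_fract algebra_simps)
qed

lemma ex_shifted_weight: "\<exists>n. n \<in> weights Am \<and> n + e \<in> weights Am"
proof (rule ccontr)
  assume H: "\<not> ?thesis"
  have "D = (\<lambda>_. 0)"
  proof (rule vanish_on_hom)
    show "\<And>x y. D (x + y) = D x + D y" by (rule dl.Dadd)
    fix m a assume a: "a \<in> Am m"
    show "D a = 0"
    proof (rule ccontr)
      assume "D a \<noteq> 0"
      then have "a \<noteq> 0" using D0 by auto
      then have "m \<in> weights Am" "m + e \<in> weights Am" using a D_hom[OF a] \<open>D a \<noteq> 0\<close> weightsI by auto
      then show False using H by blast
    qed
  qed
  then show False using nz by simp
qed

definition base_weight where "base_weight = (SOME n. n \<in> weights Am \<and> n + e \<in> weights Am)"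
lemma base_weight: "base_weight \<in> weights Am" "base_weight + e \<in> weights Am"
  using someI_ex[OF ex_shifted_weight] unfolding base_weight_def by auto

definition dlog_step where "dlog_step = dlog (base_weight + e) - dlog base_weight"

lemma dlog_shift:
  assumes "x \<in> weights Am" "x + e \<in> weights Am"
  shows "dlog (x + e) = dlog x + dlog_step"
proof -
  have e1: "dlog ((x + e) + base_weight) = dlog (x + e) + dlog base_weight"
    by (rule dlog_add) (use assms base_weight in auto)
  have e2: "dlog ((base_weight + e) + x) = dlog (base_weight + e) + dlog x"
    by (rule dlog_add) (use assms base_weight in auto)
  have e3: "(x + e) + base_weight = (base_weight + e) + x" by (simp only: ac_simps)
  have "dlog (x + e) + dlog base_weight = dlog (base_weight + e) + dlog x" using e1 e2 e3 by simp
  then show ?thesis unfolding dlog_step_def by (simp add: algebra_simps)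
qed

lemma dlog_arith_progression:
  assumes "\<And>i. i \<le> j \<Longrightarrow> m + of_nat i * e \<in> weights Am"
  shows "dlog (m + of_nat j * e) = dlog m + of_nat j * dlog_step"
  using assms
proof (induct j)
  case 0 then show ?case by simp
next
  case (Suc j)
  have IH: "dlog (m + of_nat j * e) = dlog m + of_nat j * dlog_step"
    by (rule Suc(1), rule Suc(2)) simp
  have eq: "m + of_nat (Suc j) * e = m + of_nat j * e + e" by (simp add: algebra_simps)
  have w1: "m + of_nat j * e \<in> weights Am" by (rule Suc(2)) simp
  have w2: "m + of_nat j * e + e \<in> weights Am" unfolding eq[symmetric] by (rule Suc(2)) simp
  have "dlog (m + of_nat (Suc j) * e) = dlog (m + of_nat j * e) + dlog_step"
    unfolding eq by (rule dlog_shift[OF w1 w2])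
  also have "\<dots> = dlog m + of_nat (Suc j) * dlog_step" unfolding IH by (simp add: algebra_simps)
  finally show ?case .
qed

lemma dlog_nat_multiple:
  assumes m: "m \<in> weights Am"
  shows "\<exists>j::nat. dlog m = - of_nat j * dlog_step"
proof -
  obtain a where a: "a \<in> Am m" "a \<noteq> 0" using m unfolding weights_iff by blast
  obtain n where n: "(D ^^ n) a = 0" using lnd unfolding locally_nilpotent_def by blast
  define k where "k = (LEAST n. (D ^^ n) a = 0)"
  have k: "(D ^^ k) a = 0" unfolding k_def using n by (rule LeastI)
  have nk: "\<And>j. j < k \<Longrightarrow> (D ^^ j) a \<noteq> 0" unfolding k_def using not_less_Least by blast
  have k0: "k \<noteq> 0"
  proof
    assume "k = 0" then show False using k a by simp
  qed
  have wj: "\<And>i. i \<le> k - 1 \<Longrightarrow> m + of_nat i * e \<in> weights Am"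
    using nk Dpow_hom[OF a(1)] weightsI k0 by (metis Suc_pred' le_imp_less_Suc neq0_conv)
  let ?b = "(D ^^ (k - 1)) a"
  have b1: "?b \<in> Am (m + of_nat (k - 1) * e)" by (rule Dpow_hom[OF a(1)])
  have b2: "?b \<noteq> 0" using nk[of "k - 1"] k0 by simp
  note b = b1 b2
  have "D ?b = 0" using k k0 by (metis Suc_pred' funpow.simps(2) comp_def neq0_conv)
  then have "dlog (m + of_nat (k - 1) * e) = 0" using dlog_eq[OF b] by (simp add: fract_collapse)
  then have "dlog m = - of_nat (k - 1) * dlog_step"
    using dlog_arith_progression[OF wj] by (simp add: algebra_simps eq_neg_iff_add_eq_0)
  then show ?thesis by blast
qed

lemma dlog_step_nonzero: "dlog_step \<noteq> 0"
proof
  assume c0: "dlog_step = 0"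
  have "D = (\<lambda>_. 0)"
  proof (rule vanish_on_hom)
    show "\<And>x y. D (x + y) = D x + D y" by (rule dl.Dadd)
    fix m a assume a: "a \<in> Am m"
    show "D a = 0"
    proof (cases "a = 0")
      case True then show ?thesis by (simp add: D0)
    next
      case False
      then have "m \<in> weights Am" using a weightsI by auto
      then have "dlog m = 0" using dlog_nat_multiple c0 by auto
      then have "Fract (D a) 1 = 0" using Fract_D_dlog[OF a] by simp
      then show ?thesis by (simp add: Zero_fract_def eq_fract)
    qed
  qed
  then show False using nz by simp
qed

definition dlog_index :: "('n \<Rightarrow> int) \<Rightarrow> nat" where
  "dlog_index m = (SOME j. dlog m = - of_nat j * dlog_step)"

lemma dlog_index:
  assumes w: "m \<in> weights Am"
  shows "dlog m = - of_nat (dlog_index m) * dlog_step"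
  using someI_ex[OF dlog_nat_multiple[OF w]] unfolding dlog_index_def .

lemma dlog_step_cancel: "(of_int x :: 'a fract) * dlog_step = of_int y * dlog_step \<Longrightarrow> x = y"
  using dlog_step_nonzero of_int_fract_inj by simp

lemma dlog_index_add:
  assumes "m \<in> weights Am" "m' \<in> weights Am"
  shows "int (dlog_index (m + m')) = int (dlog_index m) + int (dlog_index m')"
proof -
  have "dlog (m + m') = dlog m + dlog m'" by (rule dlog_add[OF assms])
  then have "(of_int (int (dlog_index (m + m'))) :: 'a fract) * dlog_step = of_int (int (dlog_index m) + int (dlog_index m')) * dlog_step"
    using dlog_index assms weights_add by (simp add: algebra_simps)
  then show ?thesis by (rule dlog_step_cancel)
qed

lemma dlog_index_shift:
  assumes "x \<in> weights Am" "x + e \<in> weights Am"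
  shows "int (dlog_index (x + e)) = int (dlog_index x) - 1"
proof -
  have "dlog (x + e) = dlog x + dlog_step" by (rule dlog_shift[OF assms])
  then have "(of_int (int (dlog_index (x + e))) :: 'a fract) * dlog_step = of_int (int (dlog_index x) - 1) * dlog_step"
    using dlog_index assms by (simp add: algebra_simps)
  then show ?thesis by (rule dlog_step_cancel)
qed

text \<open>Since the weights generate \<open>M\<close>, \<open>dlog_index\<close> extends additively from the weights to \<open>M\<close>.\<close>
definition lnd_form :: "('n \<Rightarrow> int) \<Rightarrow> int" where
  "lnd_form m = (let uv = (SOME uv. fst uv \<in> weights Am \<and> snd uv \<in> weights Am \<and> m = fst uv - snd uv)
          in int (dlog_index (fst uv)) - int (dlog_index (snd uv)))"

lemma dlog_index_diff:
  assumes "u \<in> weights Am" "v \<in> weights Am" "u' \<in> weights Am" "v' \<in> weights Am" "u - v = u' - v'"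
  shows "int (dlog_index u) - int (dlog_index v) = int (dlog_index u') - int (dlog_index v')"
proof -
  have "u + v' = u' + v" using assms(5) by (simp add: fun_eq_iff algebra_simps)
  then have "int (dlog_index (u + v')) = int (dlog_index (u' + v))" by simp
  then show ?thesis using dlog_index_add assms by simp
qed

lemma lnd_form_eq:
  assumes "u \<in> weights Am" "v \<in> weights Am" "m = u - v"
  shows "lnd_form m = int (dlog_index u) - int (dlog_index v)"
proof -
  have ex: "\<exists>uv. fst uv \<in> weights Am \<and> snd uv \<in> weights Am \<and> m = fst uv - snd uv"
    using assms by (intro exI[of _ "(u, v)"]) simp
  let ?uv = "SOME uv. fst uv \<in> weights Am \<and> snd uv \<in> weights Am \<and> m = fst uv - snd uv"
  have uv: "fst ?uv \<in> weights Am" "snd ?uv \<in> weights Am" "m = fst ?uv - snd ?uv"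
    using someI_ex[OF ex] by auto
  show ?thesis unfolding lnd_form_def Let_def
    using dlog_index_diff[OF uv(1,2) assms(1,2)] uv(3) assms(3) by simp
qed

lemma lnd_form_weight: "m \<in> weights Am \<Longrightarrow> lnd_form m = int (dlog_index m)"
  using lnd_form_eq[of m 0 m] zero_in_weights dlog_index_add[of 0 0] by simp

lemma lnd_form_add: "lnd_form (x + y) = lnd_form x + lnd_form y"
proof -
  obtain u v where uv: "u \<in> weights Am" "v \<in> weights Am" "x = u - v"
    using effective_diff_weights[OF eff] by blast
  obtain u' v' where uv': "u' \<in> weights Am" "v' \<in> weights Am" "y = u' - v'"
    using effective_diff_weights[OF eff] by blast
  have "x + y = (u + u') - (v + v')" unfolding uv(3) uv'(3) by (simp add: fun_eq_iff)
  then have "lnd_form (x + y) = int (dlog_index (u + u')) - int (dlog_index (v + v'))"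
    using lnd_form_eq weights_add uv uv' by blast
  also have "\<dots> = lnd_form x + lnd_form y" using lnd_form_eq uv uv' dlog_index_add by simp
  finally show ?thesis .
qed

lemma lnd_form_degree: "lnd_form e = -1"
proof -
  have "lnd_form e = int (dlog_index (base_weight + e)) - int (dlog_index base_weight)"
    using lnd_form_eq[OF base_weight(2) base_weight(1)] by simp
  then show ?thesis using dlog_index_shift[OF base_weight] by simp
qed

lemma Fract_D_lnd_form:
  assumes a: "a \<in> Am m"
  shows "Fract (D a) 1 = of_int (lnd_form m) * (- dlog_step) * Fract a 1"
proof (cases "a = 0")
  case True then show ?thesis by (simp add: D0 fract_collapse)
next
  case False
  then have w: "m \<in> weights Am" using a weightsI by auto
  show ?thesis using Fract_D_dlog[OF a] dlog_index[OF w] lnd_form_weight[OF w] by simp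
qed

lemma lnd_form_base_weight: "lnd_form base_weight \<ge> 1"
proof -
  have "lnd_form (base_weight + e) = lnd_form base_weight - 1"
    using lnd_form_add lnd_form_degree by simp
  moreover have "lnd_form (base_weight + e) \<ge> 0" using lnd_form_weight[OF base_weight(2)] by simp
  ultimately show ?thesis by simp
qed

lemma fiber_type_weight_form: "lnd_weight_form \<iota> Am D e lnd_form (- dlog_step)"
proof unfold_locales
  show "k_linear D" by (rule k_linear_derivation[OF der])
  show "acts_as D e lnd_form (- dlog_step)"
    unfolding acts_as_def using D_hom Fract_D_lnd_form by blast
  show "\<exists>n\<in>weights Am. 1 \<le> lnd_form n" using base_weight lnd_form_base_weight by blast
qed (use k_algebra graded lnd_form_add lnd_form_weight lnd_form_degree dlog_step_nonzero in auto)

end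
section \<open>The weight cone\<close>

lemma infinite_pointwise_mono_subset:
  fixes f :: "nat \<Rightarrow> 'j \<Rightarrow> nat"
  assumes "finite J"
  shows "infinite I \<Longrightarrow> \<exists>I'. I' \<subseteq> I \<and> infinite I' \<and> (\<forall>i\<in>I'. \<forall>j\<in>I'. i < j \<longrightarrow> (\<forall>x\<in>J. f i x \<le> f j x))"
  using assms
proof (induct J arbitrary: I rule: finite_induct)
  case empty then show ?case by blast
next
  case (insert x J)
  obtain I1 where I1: "I1 \<subseteq> I" "infinite I1" "\<forall>i\<in>I1. \<forall>j\<in>I1. i < j \<longrightarrow> (\<forall>y\<in>J. f i y \<le> f j y)"
    using insert(3)[OF insert(4)] by blast
  define I' where "I' = {i \<in> I1. \<forall>j\<in>I1. i < j \<longrightarrow> f i x \<le> f j x}"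
  have "infinite I'"
    unfolding infinite_nat_iff_unbounded_le
  proof
    fix N
    have "\<exists>j\<in>I1. j \<ge> N" using I1(2) unfolding infinite_nat_iff_unbounded_le by blast
    then have ex: "\<exists>v j. j \<in> I1 \<and> j \<ge> N \<and> f j x = v" by blast
    define v where "v = (LEAST v. \<exists>j. j \<in> I1 \<and> j \<ge> N \<and> f j x = v)"
    have "\<exists>j. j \<in> I1 \<and> j \<ge> N \<and> f j x = v" unfolding v_def
      using ex by (rule exE) (rule LeastI_ex, blast)
    then obtain i where i: "i \<in> I1" "i \<ge> N" "f i x = v" by blast
    have "i \<in> I'" unfolding I'_def
    proof (intro CollectI conjI ballI impI)
      show "i \<in> I1" by (rule i(1))
      fix j assume j: "j \<in> I1" "i < j"
      then have "v \<le> f j x" unfolding v_def using i(2) by (intro Least_le) auto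
      then show "f i x \<le> f j x" using i(3) by simp
    qed
    then show "\<exists>n\<ge>N. n \<in> I'" using i(2) by blast
  qed
  moreover have "I' \<subseteq> I" using I1(1) unfolding I'_def by auto
  moreover have "\<forall>i\<in>I'. \<forall>j\<in>I'. i < j \<longrightarrow> (\<forall>y\<in>insert x J. f i y \<le> f j y)"
    using I1(3) unfolding I'_def by auto
  ultimately show ?case by blast
qed

lemma ex_pointwise_le_pair:
  fixes f :: "nat \<Rightarrow> 'j \<Rightarrow> nat"
  assumes "finite J"
  shows "\<exists>k k'. k < k' \<and> (\<forall>x\<in>J. f k x \<le> f k' x)"
proof -
  obtain I' where I': "infinite I'" "\<forall>i\<in>I'. \<forall>j\<in>I'. i < j \<longrightarrow> (\<forall>x\<in>J. f i x \<le> f j x)"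
    using infinite_pointwise_mono_subset[OF assms, where I="UNIV :: nat set" and f=f] by auto
  obtain k where k: "k \<in> I'" using I'(1) by (metis finite.emptyI ex_in_conv)
  obtain k' where k': "k' \<ge> Suc k" "k' \<in> I'"
    using I'(1) unfolding infinite_nat_iff_unbounded_le by blast
  show ?thesis using I'(2) k k' by (intro exI[of _ k] exI[of _ k']) auto
qed

context graded_algebra
begin

definition nat_comb :: "('n \<Rightarrow> int) set \<Rightarrow> ('n \<Rightarrow> int) \<Rightarrow> bool" where
  "nat_comb W m \<longleftrightarrow> (\<exists>N. m = (\<lambda>i. \<Sum>g\<in>W. int (N g) * g i))"

lemma nat_comb_0: "nat_comb W 0"
  unfolding nat_comb_def by (intro exI[of _ "\<lambda>_. 0"]) (simp add: fun_eq_iff)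

lemma nat_comb_add: "nat_comb W m \<Longrightarrow> nat_comb W m' \<Longrightarrow> nat_comb W (m + m')"
  unfolding nat_comb_def
proof (elim exE)
  fix N N' assume "m = (\<lambda>i. \<Sum>g\<in>W. int (N g) * g i)" "m' = (\<lambda>i. \<Sum>g\<in>W. int (N' g) * g i)"
  then show "\<exists>N. m + m' = (\<lambda>i. \<Sum>g\<in>W. int (N g) * g i)"
    by (intro exI[of _ "\<lambda>g. N g + N' g"]) (simp add: fun_eq_iff sum.distrib algebra_simps)
qed

lemma nat_comb_gen: "finite W \<Longrightarrow> m \<in> W \<Longrightarrow> nat_comb W m"
  unfolding nat_comb_def
proof (intro exI[of _ "\<lambda>g. if g = m then 1 else 0"] ext)
  fix i assume "finite W" "m \<in> W"
  have "(\<Sum>g\<in>W. int (if g = m then 1 else 0) * g i) = (\<Sum>g\<in>W. if g = m then g i else 0)"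
    by (rule sum.cong) auto
  then show "m i = (\<Sum>g\<in>W. int (if g = m then 1 else 0) * g i)"
    using \<open>finite W\<close> \<open>m \<in> W\<close> by (simp add: sum.delta')
qed

lemma hcomp_mult_nonzero:
  assumes "hcomp Am (x * y) m \<noteq> 0"
  shows "\<exists>m1 m2. hcomp Am x m1 \<noteq> 0 \<and> hcomp Am y m2 \<noteq> 0 \<and> m = m1 + m2"
proof -
  let ?Sa = "{m. hcomp Am x m \<noteq> 0}" and ?Sb = "{m. hcomp Am y m \<noteq> 0}"
  have fa: "finite ?Sa" and fb: "finite ?Sb" using hcomp_fin by auto
  have "x * y = (\<Sum>m\<in>?Sa. hcomp Am x m) * (\<Sum>m\<in>?Sb. hcomp Am y m)"
    using hcomp_sum[of x] hcomp_sum[of y] by simp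
  also have "\<dots> = (\<Sum>p\<in>?Sa \<times> ?Sb. hcomp Am x (fst p) * hcomp Am y (snd p))"
    by (simp add: sum_product sum.cartesian_product case_prod_beta)
  finally have ab: "x * y = (\<Sum>p\<in>?Sa \<times> ?Sb. hcomp Am x (fst p) * hcomp Am y (snd p))" .
  have "hcomp Am (x * y) = (\<lambda>m. \<Sum>p\<in>{p\<in>?Sa \<times> ?Sb. fst p + snd p = m}. hcomp Am x (fst p) * hcomp Am y (snd p))"
    unfolding ab by (rule hcomp_of_sum) (use fa fb in \<open>auto intro: mult_in hcomp_in\<close>)
  then have "{p\<in>?Sa \<times> ?Sb. fst p + snd p = m} \<noteq> {}" using assms by (intro notI) simp
  then show ?thesis by auto
qed

lemma subalg_gen_degrees:
  assumes G: "finite G" and x: "x \<in> subalg_gen \<iota> G"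
  shows "hcomp Am x m \<noteq> 0 \<Longrightarrow> nat_comb (\<Union>g\<in>G. {m. hcomp Am g m \<noteq> 0}) m"
  using x
proof (induct arbitrary: m rule: subalg_gen.induct)
  case (gen g)
  have "finite (\<Union>g\<in>G. {m. hcomp Am g m \<noteq> 0})" using G hcomp_fin by auto
  then show ?case using nat_comb_gen gen by blast
next
  case (const c)
  then have "m = 0" using hcomp_hom[OF iota_in[of c]] by (auto split: if_splits)
  then show ?case by (simp only: nat_comb_0)
next
  case (add x y)
  from add(5) have "hcomp Am x m \<noteq> 0 \<or> hcomp Am y m \<noteq> 0" by (auto simp: hcomp_add)
  then show ?case using add(2,4) by blast
next
  case (mult x y)
  then show ?case using hcomp_mult_nonzero nat_comb_add by metis
qed

lemma weights_finitely_generated_monoid: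
  assumes fg: "finitely_generated \<iota>"
  shows "\<exists>W. finite W \<and> (\<forall>g\<in>W. g \<in> weights Am) \<and> (\<forall>m. m \<in> weights Am \<longrightarrow> nat_comb W m)"
proof -
  obtain G where G: "finite G" "\<forall>a. a \<in> subalg_gen \<iota> G"
    using fg unfolding finitely_generated_def by blast
  let ?W = "\<Union>g\<in>G. {m. hcomp Am g m \<noteq> 0}"
  have "finite ?W" using G(1) hcomp_fin by auto
  moreover have "\<forall>g\<in>?W. g \<in> weights Am" using hcomp_in weightsI by blast
  moreover have "nat_comb ?W m" if m: "m \<in> weights Am" for m
  proof -
    obtain a where a: "a \<in> Am m" "a \<noteq> 0" using m unfolding weights_iff by blast
    then have "hcomp Am a m \<noteq> 0" using hcomp_hom[OF a(1)] by simp
    then show "nat_comb ?W m" using subalg_gen_degrees G by blast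
  qed
  ultimately show ?thesis by blast
qed

text \<open>Among the exponent vectors of the terms of the progression with respect to the finitely many
  monoid generators, Dickson's lemma gives two comparable ones; their difference exhibits a multiple
  of \<open>v\<close> as a nonnegative combination of weights.\<close>
lemma weight_cone_if_progression:
  assumes fg: "finitely_generated \<iota>"
    and progression: "\<And>k. m0 + nat_scale k v \<in> weights Am"
  shows "v \<in> weight_cone_M Am"
proof -
  obtain W where W: "finite W" "\<forall>g\<in>W. g \<in> weights Am" "\<forall>m. m \<in> weights Am \<longrightarrow> nat_comb W m"
    using weights_finitely_generated_monoid[OF fg] by blast
  define N where "N k = (SOME N. (\<lambda>i. m0 i + int k * v i) = (\<lambda>i. \<Sum>g\<in>W. int (N g) * g i))" for k :: nat
  have N: "(\<lambda>i. m0 i + int k * v i) = (\<lambda>i. \<Sum>g\<in>W. int (N k g) * g i)" for k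
  proof -
    have "(\<lambda>i. m0 i + int k * v i) = m0 + nat_scale k v" by (simp add: nat_scale_def fun_eq_iff)
    then have "nat_comb W (\<lambda>i. m0 i + int k * v i)" using W(3) progression by metis
    then show ?thesis unfolding nat_comb_def N_def by (rule someI_ex)
  qed
  obtain k k' where kk: "k < k'" "\<forall>g\<in>W. N k g \<le> N k' g"
    using ex_pointwise_le_pair[OF W(1), of N] by blast
  define c where "c g = (of_int (int (N k' g) - int (N k g)) / of_nat (k' - k) :: rat)" for g
  have c0: "\<forall>s\<in>W. c s \<ge> 0" using kk unfolding c_def by auto
  have eqn: "(\<lambda>i. of_int (v i)) = (\<lambda>i. \<Sum>s\<in>W. c s * of_int (s i))"
  proof
    fix i
    have e1: "m0 i + int k * v i = (\<Sum>g\<in>W. int (N k g) * g i)"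
      using fun_cong[OF N[of k], of i] by simp
    have e2: "m0 i + int k' * v i = (\<Sum>g\<in>W. int (N k' g) * g i)"
      using fun_cong[OF N[of k'], of i] by simp
    have "int (k' - k) * v i = (\<Sum>g\<in>W. (int (N k' g) - int (N k g)) * g i)"
      using e1 e2 kk(1) by (simp add: sum_subtractf left_diff_distrib of_nat_diff algebra_simps)
    then have "(of_int (int (k' - k) * v i) :: rat) = of_int (\<Sum>g\<in>W. (int (N k' g) - int (N k g)) * g i)"
      by simp
    then have "of_nat (k' - k) * (of_int (v i) :: rat) = (\<Sum>g\<in>W. of_int (int (N k' g) - int (N k g)) * of_int (g i))"
      by simp
    then have "(of_int (v i) :: rat) = (\<Sum>g\<in>W. of_int (int (N k' g) - int (N k g)) * of_int (g i)) / of_nat (k' - k)"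
      using kk(1) by (simp add: field_simps)
    also have "\<dots> = (\<Sum>s\<in>W. c s * of_int (s i))"
      unfolding c_def by (simp add: sum_divide_distrib)
    finally show "(of_int (v i) :: rat) = (\<Sum>s\<in>W. c s * of_int (s i))" .
  qed
  have "W \<subseteq> weights Am" using W(2) by auto
  then show ?thesis unfolding weight_cone_M_def using W(1) c0 eqn by blast
qed

end
section \<open>Pairs of derivations of weight form\<close>

lemma lie_gen_swap: "lie_gen \<iota> D1 D2 = lie_gen \<iota> D2 D1"
proof -
  have "lie_gen \<iota> X Y \<subseteq> lie_gen \<iota> Y X" for X Y :: "'a::comm_ring_1 \<Rightarrow> 'a"
  proof
    fix Z assume "Z \<in> lie_gen \<iota> X Y"
    then show "Z \<in> lie_gen \<iota> Y X" by induct (auto intro: lie_gen.intros)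
  qed
  then show ?thesis by blast
qed

locale lnd_pair = graded_algebra \<iota> Am +
  L1: lnd_weight_form \<iota> Am D1 e1 P1 w1 + L2: lnd_weight_form \<iota> Am D2 e2 P2 w2
  for \<iota> :: "'k::field_char_0 \<Rightarrow> 'a::idom" and Am :: "('n::finite \<Rightarrow> int) \<Rightarrow> 'a set"
    and D1 e1 P1 w1 D2 e2 P2 w2 +
  assumes effective: "effective_grading Am"
begin

lemma cross_degree_neg_sym:
  assumes s: "P1 e2 < 0"
  shows "P2 e1 < 0"
proof (rule ccontr)
  assume t: "\<not> P2 e1 < 0"
  obtain n where n: "n \<in> weights Am" "P2 n \<ge> 1" using L2.P_positive by blast
  let ?m = "n + nat_scale (nat (P1 n)) e1"
  have m: "?m \<in> weights Am" "P1 ?m = 0" using L1.weights_chain_end[OF n(1)] by auto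
  have "P2 ?m = P2 n + P1 n * P2 e1"
    using L2.P_add additive_nat_scale[OF L2.P_add] L1.P_nonneg[OF n(1)] by (simp add: mult.commute)
  moreover have "P1 n * P2 e1 \<ge> 0" using L1.P_nonneg[OF n(1)] t by simp
  ultimately have "?m + e2 \<in> weights Am" using n(2) by (intro L2.weights_shift[OF m(1)]) simp
  then have "P1 (?m + e2) \<ge> 0" by (rule L1.P_nonneg)
  then show False using L1.P_add m(2) s by simp
qed

lemma forms_eq_if_cross_degrees_neg:
  assumes s: "P1 e2 < 0" and t: "P2 e1 < 0"
  shows "P1 = P2"
proof
  have on_weights: "P1 m = P2 m" if m: "m \<in> weights Am" for m
  proof -
    have "P1 m + P2 m * P1 e2 \<ge> 0" "P2 m + P1 m * P2 e1 \<ge> 0"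
      using L2.additive_nonneg_bound[OF L1.P_add L1.P_nonneg m]
        L1.additive_nonneg_bound[OF L2.P_add L2.P_nonneg m] by auto
    moreover have "P2 m * P1 e2 \<le> P2 m * (-1)" "P1 m * P2 e1 \<le> P1 m * (-1)"
      using L1.P_nonneg[OF m] L2.P_nonneg[OF m] s t by (intro mult_left_mono; simp)+
    ultimately show ?thesis by simp
  qed
  fix x
  obtain u v where uv: "u \<in> weights Am" "v \<in> weights Am" "x = u - v"
    using effective_diff_weights[OF effective] by blast
  have "u = x + v" using uv(3) by simp
  then have "P1 u = P1 x + P1 v" "P2 u = P2 x + P2 v" using L1.P_add L2.P_add by simp_all
  then show "P1 x = P2 x" using on_weights[OF uv(1)] on_weights[OF uv(2)] by simp
qed

lemma cross_degrees_pos_in_weight_cone: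
  assumes s: "P1 e2 \<ge> 1" and t: "P2 e1 \<ge> 1" and fg: "finitely_generated \<iota>"
  shows "e1 + e2 \<in> weight_cone_M Am"
proof -
  obtain n where n: "n \<in> weights Am" "P2 n \<ge> 1" using L2.P_positive by blast
  have "n + nat_scale k (e1 + e2) \<in> weights Am \<and> P2 (n + nat_scale k (e1 + e2)) \<ge> 1" for k
  proof (induct k)
    case 0 then show ?case using n by (simp add: nat_scale_0)
  next
    case (Suc k)
    let ?m = "n + nat_scale k (e1 + e2)"
    have IH: "?m \<in> weights Am" "P2 ?m \<ge> 1" using Suc by blast+
    have m2: "?m + e2 \<in> weights Am" by (rule L2.weights_shift[OF IH(1)]) (use IH(2) in linarith)
    have "P1 (?m + e2) \<ge> 1" using L1.P_add L1.P_nonneg[OF IH(1)] s by simp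
    then have m21: "?m + e2 + e1 \<in> weights Am" by (intro L1.weights_shift[OF m2]) linarith
    have "P2 (?m + e2 + e1) \<ge> 1" using L2.P_add L2.P_degree IH(2) t by simp
    moreover have "?m + e2 + e1 = n + nat_scale (Suc k) (e1 + e2)"
      by (simp add: nat_scale_Suc algebra_simps)
    ultimately show ?case using m21 by (simp only:)
  qed
  then show ?thesis using weight_cone_if_progression[OF fg] by blast
qed

lemma lie_gen_if_forms_eq:
  assumes eq: "P1 = P2"
  shows "finite_dim_k \<iota> (lie_gen \<iota> D1 D2) \<and> (\<forall>D\<in>lie_gen \<iota> D1 D2. locally_nilpotent D)"
proof -
  have commute: "lie_bracket D1 D2 = (\<lambda>_. 0)"
    by (rule acts_as_zero[OF k_linear_lie_bracket[OF L1.linear L2.linear]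
          acts_as_lie_bracket[OF L1.acts L2.acts L1.P_add L2.P_add]])
      (use L1.P_degree L2.P_degree eq in simp)
  have closed: "lie_bracket b b' \<in> k_span {D1, D2}" if "b \<in> {D1, D2}" "b' \<in> {D1, D2}" for b b'
    using that commute lie_bracket_antisym[of D2 D1] k_span_zero by (auto simp: lie_bracket_self)
  have lowering: "\<exists>d. homogeneous_of_degree Am b d \<and> P1 d < 0" if "b \<in> {D1, D2}" for b
  proof -
    have "homogeneous_of_degree Am D1 e1 \<and> P1 e1 < 0" "homogeneous_of_degree Am D2 e2 \<and> P1 e2 < 0"
      using acts_as_homogeneous[OF L1.acts] acts_as_homogeneous[OF L2.acts] L1.P_degree L2.P_degree eq
      by auto
    then show ?thesis using that by blast
  qed
  have linear: "k_linear b" if "b \<in> {D1, D2}" for b using that L1.linear L2.linear by auto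
  show ?thesis
    by (rule lie_gen_finite_dim_locally_nilpotent[OF _ _ linear _ _ closed lowering L1.P_add L1.P_nonneg])
      (simp_all add: k_span_mem lie_gen.gen1 lie_gen.gen2)
qed

abbreviation ad_iter :: "nat \<Rightarrow> 'a \<Rightarrow> 'a" where
  "ad_iter n \<equiv> (lie_bracket D1 ^^ n) D2"

lemma k_linear_ad_iter: "k_linear (ad_iter n)"
  by (induct n) (auto intro: k_linear_lie_bracket L1.linear L2.linear)

lemma ad_iter_in_lie_gen: "ad_iter n \<in> lie_gen \<iota> D1 D2"
  by (induct n) (auto simp: lie_bracket_def intro: lie_gen.intros)

lemma ad_iter_acts_as:
  assumes t: "P2 e1 = 0"
  shows "acts_as (ad_iter n) (nat_scale n e1 + e2) (\<lambda>m. (\<Prod>i<n. P1 e2 - int i) * P2 m) (w1 ^ n * w2)"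
proof (induct n)
  case 0 show ?case using L2.acts by (simp add: nat_scale_0)
next
  case (Suc n)
  let ?\<kappa> = "\<Prod>i<n. P1 e2 - int i"
  have "acts_as (lie_bracket D1 (ad_iter n)) (e1 + (nat_scale n e1 + e2))
      (\<lambda>m. P1 (nat_scale n e1 + e2) * (?\<kappa> * P2 m) - ?\<kappa> * P2 e1 * P1 m) (w1 * (w1 ^ n * w2))"
    by (rule acts_as_lie_bracket[OF L1.acts Suc L1.P_add]) (simp only: L2.P_add distrib_left)
  then show ?case unfolding funpow.simps(2) o_apply
  proof (rule acts_as_cong)
    show "e1 + (nat_scale n e1 + e2) = nat_scale (Suc n) e1 + e2"
      by (simp add: nat_scale_Suc algebra_simps)
    fix m
    show "P1 (nat_scale n e1 + e2) * (?\<kappa> * P2 m) - ?\<kappa> * P2 e1 * P1 m = (\<Prod>i<Suc n. P1 e2 - int i) * P2 m"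
      using L1.P_add additive_nat_scale[OF L1.P_add] L1.P_degree t by (simp add: algebra_simps)
  qed simp
qed

lemma ad_iter_vanishes:
  assumes t: "P2 e1 = 0" and s: "P1 e2 \<ge> 0" and n: "nat (P1 e2) < n"
  shows "ad_iter n = (\<lambda>_. 0)"
proof (rule acts_as_zero[OF k_linear_ad_iter ad_iter_acts_as[OF t]])
  have "(\<Prod>i<n. P1 e2 - int i) = 0" using s n by (intro prod_zero bexI[of _ "nat (P1 e2)"]) auto
  then show "(\<Prod>i<n. P1 e2 - int i) * P2 m = 0" for m by simp
qed

lemma P2_ad_iter_degree: "P2 e1 = 0 \<Longrightarrow> P2 (nat_scale n e1 + e2) = -1"
  using L2.P_add additive_nat_scale[OF L2.P_add] L2.P_degree by simp

lemma ad_iter_commute: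
  assumes t: "P2 e1 = 0"
  shows "lie_bracket (ad_iter a) (ad_iter b) = (\<lambda>_. 0)"
proof (rule acts_as_zero[OF k_linear_lie_bracket[OF k_linear_ad_iter k_linear_ad_iter]
      acts_as_lie_bracket[OF ad_iter_acts_as[OF t] ad_iter_acts_as[OF t]]])
  show "\<And>x y. (\<Prod>i<a. P1 e2 - int i) * P2 (x + y) = (\<Prod>i<a. P1 e2 - int i) * P2 x + (\<Prod>i<a. P1 e2 - int i) * P2 y"
    "\<And>x y. (\<Prod>i<b. P1 e2 - int i) * P2 (x + y) = (\<Prod>i<b. P1 e2 - int i) * P2 x + (\<Prod>i<b. P1 e2 - int i) * P2 y"
    by (simp_all only: L2.P_add distrib_left)
qed (simp add: P2_ad_iter_degree[OF t])

abbreviation ad_basis :: "('a \<Rightarrow> 'a) set" where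
  "ad_basis \<equiv> insert D1 (ad_iter ` {..nat (P1 e2)})"

lemma lie_bracket_D1_ad_iter_in_span:
  assumes t: "P2 e1 = 0" and s: "P1 e2 \<ge> 0"
  shows "lie_bracket D1 (ad_iter a) \<in> k_span ad_basis"
proof (cases "a < nat (P1 e2)")
  case True
  have "lie_bracket D1 (ad_iter a) = ad_iter (Suc a)" by simp
  moreover have "ad_iter (Suc a) \<in> ad_basis" using True by (intro insertI2 imageI) simp
  ultimately show ?thesis using k_span_mem[of _ ad_basis] by simp
next
  case False
  then have "ad_iter (Suc a) = (\<lambda>_. 0)" by (intro ad_iter_vanishes[OF t s]) simp
  then show ?thesis using k_span_zero by (simp only: funpow.simps comp_def)
qed

lemma ad_basis_lie_bracket_closed:
  assumes t: "P2 e1 = 0" and s: "P1 e2 \<ge> 0" and b: "b \<in> ad_basis" and b': "b' \<in> ad_basis"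
  shows "lie_bracket b b' \<in> k_span ad_basis"
proof -
  note bracket_D1 = lie_bracket_D1_ad_iter_in_span[OF t s]
  consider "b = D1" "b' = D1" | a where "b = D1" "b' = ad_iter a"
    | a where "b = ad_iter a" "b' = D1" | a a' where "b = ad_iter a" "b' = ad_iter a'"
    using b b' by blast
  then show ?thesis
  proof cases
    case 1 then show ?thesis using k_span_zero by (simp add: lie_bracket_self)
  next
    case 2 then show ?thesis using bracket_D1 by simp
  next
    case (3 a)
    have "lie_bracket b b' = (\<lambda>x. - lie_bracket D1 (ad_iter a) x)"
      by (simp only: 3) (rule lie_bracket_antisym)
    then show ?thesis using k_span_neg[OF bracket_D1] by simp
  next
    case 4 then show ?thesis using k_span_zero ad_iter_commute[OF t] by simp
  qed
qed

lemma ad_basis_lowering: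
  assumes t: "P2 e1 = 0" and b: "b \<in> ad_basis"
  shows "\<exists>d. homogeneous_of_degree Am b d \<and> P1 d + (P1 e2 + 1) * P2 d < 0"
proof -
  have "homogeneous_of_degree Am D1 e1 \<and> P1 e1 + (P1 e2 + 1) * P2 e1 < 0"
    using acts_as_homogeneous[OF L1.acts] L1.P_degree t by simp
  moreover have "homogeneous_of_degree Am (ad_iter a) (nat_scale a e1 + e2) \<and>
      P1 (nat_scale a e1 + e2) + (P1 e2 + 1) * P2 (nat_scale a e1 + e2) < 0" for a
    using acts_as_homogeneous[OF ad_iter_acts_as[OF t]] P2_ad_iter_degree[OF t]
      L1.P_add additive_nat_scale[OF L1.P_add] L1.P_degree by simp
  ultimately show ?thesis using b by blast
qed

lemma lie_gen_if_cross_degree_zero: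
  assumes t: "P2 e1 = 0" and s: "P1 e2 \<ge> 0"
  shows "finite_dim_k \<iota> (lie_gen \<iota> D1 D2) \<and> (\<forall>D\<in>lie_gen \<iota> D1 D2. locally_nilpotent D)"
proof (rule lie_gen_finite_dim_locally_nilpotent
    [OF _ _ _ _ _ ad_basis_lie_bracket_closed[OF t s] ad_basis_lowering[OF t]])
  show "finite ad_basis" by simp
  show "ad_basis \<subseteq> lie_gen \<iota> D1 D2" using ad_iter_in_lie_gen lie_gen.gen1 by auto
  show "b \<in> ad_basis \<Longrightarrow> k_linear b" for b using L1.linear k_linear_ad_iter by auto
  have "ad_iter 0 \<in> ad_basis" by (intro insertI2 imageI) simp
  then show "D1 \<in> k_span ad_basis" "D2 \<in> k_span ad_basis" using k_span_mem[of _ ad_basis] by auto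
  show "P1 (x + y) + (P1 e2 + 1) * P2 (x + y) = (P1 x + (P1 e2 + 1) * P2 x) + (P1 y + (P1 e2 + 1) * P2 y)"
    for x y by (simp add: L1.P_add L2.P_add algebra_simps)
  show "m \<in> weights Am \<Longrightarrow> P1 m + (P1 e2 + 1) * P2 m \<ge> 0" for m
    using L1.P_nonneg L2.P_nonneg s by simp
qed

lemma lie_gen_finite_dim_locally_nilpotent_if_not_in_cone:
  assumes fg: "finitely_generated \<iota>" and not_cone: "e1 + e2 \<notin> weight_cone_M Am"
  shows "finite_dim_k \<iota> (lie_gen \<iota> D1 D2) \<and> (\<forall>D\<in>lie_gen \<iota> D1 D2. locally_nilpotent D)"
proof -
  interpret swap: lnd_pair \<iota> Am D2 e2 P2 w2 D1 e1 P1 w1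
    by (intro lnd_pair.intro graded_algebra_axioms L1.lnd_weight_form_axioms L2.lnd_weight_form_axioms
        lnd_pair_axioms.intro effective)
  show ?thesis
  proof (cases "P1 e2 < 0")
    case True
    then show ?thesis
      using cross_degree_neg_sym lie_gen_if_forms_eq forms_eq_if_cross_degrees_neg by blast
  next
    case False
    then have s: "P1 e2 \<ge> 0" and t: "P2 e1 \<ge> 0" using swap.cross_degree_neg_sym by force+
    show ?thesis
    proof (cases "P2 e1 = 0")
      case True
      then show ?thesis using s by (rule lie_gen_if_cross_degree_zero)
    next
      case t_nonzero: False
      show ?thesis
      proof (cases "P1 e2 = 0")
        case True
        then show ?thesis using t swap.lie_gen_if_cross_degree_zero lie_gen_swap by metis
      next
        case False
        then have "e1 + e2 \<in> weight_cone_M Am"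
          using s t t_nonzero by (intro cross_degrees_pos_in_weight_cone fg) auto
        then show ?thesis using not_cone by blast
      qed
    qed
  qed
qed

end

theorem corollary6p2:
  fixes \<iota> :: "'k::field_char_0 \<Rightarrow> 'a::idom"
    and Am :: "('n::finite \<Rightarrow> int) \<Rightarrow> 'a set"
    and D1 D2 :: "'a \<Rightarrow> 'a"
    and e1 e2 :: "'n \<Rightarrow> int"
  assumes "alg_closed_field TYPE('k)"
    and "k_algebra_map \<iota>"
    and "finitely_generated \<iota>"
    and "integrally_closed TYPE('a)"
    and "M_graded \<iota> Am"
    and "effective_grading Am"
    and "is_derivation \<iota> D1" and "is_derivation \<iota> D2"
    and "D1 \<noteq> (\<lambda>_. 0)" and "D2 \<noteq> (\<lambda>_. 0)"
    and "locally_nilpotent D1" and "locally_nilpotent D2"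
    and "homogeneous_of_degree Am D1 e1" and "homogeneous_of_degree Am D2 e2"
    and "fiber_type \<iota> Am D1" and "fiber_type \<iota> Am D2"
    and "e1 + e2 \<notin> weight_cone_M Am"
  shows "finite_dim_k \<iota> (lie_gen \<iota> D1 D2) \<and> (\<forall>D\<in>lie_gen \<iota> D1 D2. locally_nilpotent D)"
proof -
  interpret L1: fiber_type_lnd \<iota> Am D1 e1 by unfold_locales (use assms in auto)
  interpret L2: fiber_type_lnd \<iota> Am D2 e2 by unfold_locales (use assms in auto)
  interpret lnd_pair \<iota> Am D1 e1 L1.lnd_form "- L1.dlog_step" D2 e2 L2.lnd_form "- L2.dlog_step"
    using L1.fiber_type_weight_form L2.fiber_type_weight_form assms(6)
    unfolding lnd_pair_def lnd_pair_axioms_def lnd_weight_form_def by blast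
  show ?thesis using lie_gen_finite_dim_locally_nilpotent_if_not_in_cone assms(3,17) by blast
qed

end
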